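(* Let $(Z,\delta)$ be a configuration satisfying: (i) the diameter of $Z$ is at most $4$; (ii) whenever $u,w\in V(Z)$ are at distance $4$ in $Z$, there is a path $P$ of length $4$ joining them in $Z$ such that either $P$ is not contained in the outer face boundary of $Z$, or $P=(u,v_1,v_2,v_3,w)$ is contained in the outer face boundary of $Z$ and some $v_i$ ($i\in\{1,2,3\}$) is not a cut-vertex of $Z$ and satisfies $\delta(v_i)-d_Z(v_i)\ge 2$. If $(Z,\delta)$ is contained in a triangulation $G$ and $G$ has no obstructing cycle all of whose vertices lie in (the copy of) $Z$, then $(Z,\delta)$ is induced in $G$.
   Context: A triangulation is a simple graph embedded in the sphere all of whose faces are triangles. A near-triangulation is a connected plane graph all of whose faces other than the outer face are triangles (single vertex or edge allowed). A configuration $(Z,\delta)$ consists of a near-triangulation $Z$ and $\delta:V(Z)\to\mathbb N$ with $\delta(v)=d_Z(v)$ for vertices not on the outer face, $\delta(v)>d_Z(v)$ for vertices on the outer face, and each cut-vertex $v$ of $Z$ lying in exactly two blocks with $\delta(v)=d_Z(v)+2$ (at most one cut-vertex). A triangulation $G$ contains $(Z,\delta)$ if $Z$ is isomorphic to a subgraph of $G$ such that every inner (triangular) face of $Z$ is a face of $G$, all these faces have the same orientation in $G$ as in $Z$, $d_G(v)=\delta(v)$ for every $v\in V(Z)$, and for a cut-vertex $v$ the two edges of $G$ at $v$ not in $Z$ are non-consecutive in the cyclic order around $v$. $(Z,\delta)$ is induced in $G$ if moreover (the copy of) $Z$ is an induced subgraph of $G$. A cycle $C$ in $G$ is obstructing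 if either it has length at most $4$ and each of the two sides of $C$ contains at least one vertex, or it has length $5$ and each side contains at least two vertices. *)

theory Defs
  imports Main
begin

text \<open>A simple graph on vertex set V is represented by its set of darts A
(ordered pairs (u,w) for every edge uw, in both directions).  A plane embedding
is a rotation system rot: a permutation of the darts that maps each dart to the
next dart with the same tail in the cyclic order around that tail.  Faces are
the orbits of the face permutation phi (u,w) = rot (w,u); the embedding is in
the sphere iff Euler's formula V - E + F = 2 holds (for connected graphs).\<close>

definition walk_in :: "'v set \<Rightarrow> ('v \<times> 'v) set \<Rightarrow> 'v list \<Rightarrow> bool" where
  "walk_in S A xs \<longleftrightarrow> xs \<noteq> [] \<and> set xs \<subseteq> S \<and>
     (\<forall>i. Suc i < length xs \<longrightarrow> (xs ! i, xs ! Suc i) \<in> A)"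

definition is_walk :: "('v \<times> 'v) set \<Rightarrow> 'v list \<Rightarrow> bool" where
  "is_walk A xs \<longleftrightarrow> xs \<noteq> [] \<and> (\<forall>i. Suc i < length xs \<longrightarrow> (xs ! i, xs ! Suc i) \<in> A)"

definition is_path :: "('v \<times> 'v) set \<Rightarrow> 'v list \<Rightarrow> bool" where
  "is_path A xs \<longleftrightarrow> is_walk A xs \<and> distinct xs"

definition connected_on :: "'v set \<Rightarrow> ('v \<times> 'v) set \<Rightarrow> bool" where
  "connected_on S A \<longleftrightarrow> (\<forall>u\<in>S. \<forall>w\<in>S. \<exists>xs. walk_in S A xs \<and> hd xs = u \<and> last xs = w)"

definition dist :: "('v \<times> 'v) set \<Rightarrow> 'v \<Rightarrow> 'v \<Rightarrow> nat" where
  "dist A u w = (LEAST n. \<exists>xs. is_walk A xs \<and> hd xs = u \<and> last xs = w \<and> length xs = Suc n)"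

definition deg :: "('v \<times> 'v) set \<Rightarrow> 'v \<Rightarrow> nat" where
  "deg A v = card {w. (v, w) \<in> A}"

definition simple_graph :: "'v set \<Rightarrow> ('v \<times> 'v) set \<Rightarrow> bool" where
  "simple_graph V A \<longleftrightarrow> finite V \<and> A \<subseteq> V \<times> V \<and>
     (\<forall>u w. (u, w) \<in> A \<longrightarrow> (w, u) \<in> A) \<and> (\<forall>u. (u, u) \<notin> A)"

definition rotation_system :: "('v \<times> 'v) set \<Rightarrow> ('v \<times> 'v \<Rightarrow> 'v \<times> 'v) \<Rightarrow> bool" where
  "rotation_system A rot \<longleftrightarrow> bij_betw rot A A \<and> (\<forall>d\<in>A. fst (rot d) = fst d) \<and>
     (\<forall>d\<in>A. \<forall>d'\<in>A. fst d = fst d' \<longrightarrow> (\<exists>n. (rot ^^ n) d = d'))"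

definition phi :: "('v \<times> 'v \<Rightarrow> 'v \<times> 'v) \<Rightarrow> 'v \<times> 'v \<Rightarrow> 'v \<times> 'v" where
  "phi rot d = rot (snd d, fst d)"

definition face_orbit :: "('v \<times> 'v \<Rightarrow> 'v \<times> 'v) \<Rightarrow> 'v \<times> 'v \<Rightarrow> ('v \<times> 'v) set" where
  "face_orbit rot d = {(phi rot ^^ n) d | n. True}"

definition faces :: "('v \<times> 'v) set \<Rightarrow> ('v \<times> 'v \<Rightarrow> 'v \<times> 'v) \<Rightarrow> ('v \<times> 'v) set set" where
  "faces A rot = face_orbit rot ` A"

definition plane_graph :: "'v set \<Rightarrow> ('v \<times> 'v) set \<Rightarrow> ('v \<times> 'v \<Rightarrow> 'v \<times> 'v) \<Rightarrow> bool" where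
  "plane_graph V A rot \<longleftrightarrow> simple_graph V A \<and> V \<noteq> {} \<and> connected_on V A \<and>
     rotation_system A rot \<and>
     (A = {} \<or> int (card V) - int (card A div 2) + int (card (faces A rot)) = 2)"

definition triangulation :: "'v set \<Rightarrow> ('v \<times> 'v) set \<Rightarrow> ('v \<times> 'v \<Rightarrow> 'v \<times> 'v) \<Rightarrow> bool" where
  "triangulation V A rot \<longleftrightarrow> plane_graph V A rot \<and> A \<noteq> {} \<and>
     (\<forall>F\<in>faces A rot. card F = 3)"

definition near_triangulation ::
  "'v set \<Rightarrow> ('v \<times> 'v) set \<Rightarrow> ('v \<times> 'v \<Rightarrow> 'v \<times> 'v) \<Rightarrow> ('v \<times> 'v) set \<Rightarrow> bool" where
  "near_triangulation V A rot Out \<longleftrightarrow> plane_graph V A rot \<and>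
     ((A = {} \<and> Out = {}) \<or> Out \<in> faces A rot) \<and>
     (\<forall>F\<in>faces A rot. F \<noteq> Out \<longrightarrow> card F = 3)"

definition outer_vertices :: "'v set \<Rightarrow> ('v \<times> 'v) set \<Rightarrow> ('v \<times> 'v) set \<Rightarrow> 'v set" where
  "outer_vertices V A Out = (if A = {} then V else fst ` Out)"

definition cut_vertex :: "'v set \<Rightarrow> ('v \<times> 'v) set \<Rightarrow> 'v \<Rightarrow> bool" where
  "cut_vertex V A v \<longleftrightarrow> v \<in> V \<and> \<not> connected_on (V - {v}) A"

definition nonseparable :: "'v set \<Rightarrow> ('v \<times> 'v) set \<Rightarrow> bool" where
  "nonseparable B A \<longleftrightarrow> connected_on B A \<and> (\<forall>x\<in>B. connected_on (B - {x}) A)"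

definition is_block :: "'v set \<Rightarrow> ('v \<times> 'v) set \<Rightarrow> 'v set \<Rightarrow> bool" where
  "is_block V A B \<longleftrightarrow> B \<subseteq> V \<and> 2 \<le> card B \<and> nonseparable B A \<and>
     (\<forall>B'. B \<subset> B' \<and> B' \<subseteq> V \<longrightarrow> \<not> nonseparable B' A)"

definition configuration ::
  "'v set \<Rightarrow> ('v \<times> 'v) set \<Rightarrow> ('v \<times> 'v \<Rightarrow> 'v \<times> 'v) \<Rightarrow> ('v \<times> 'v) set \<Rightarrow> ('v \<Rightarrow> nat) \<Rightarrow> bool" where
  "configuration V A rot Out \<delta> \<longleftrightarrow> near_triangulation V A rot Out \<and>
     (\<forall>v\<in>V. v \<notin> outer_vertices V A Out \<longrightarrow> \<delta> v = deg A v) \<and>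
     (\<forall>v\<in>V. v \<in> outer_vertices V A Out \<longrightarrow> \<delta> v > deg A v) \<and>
     (\<forall>v\<in>V. cut_vertex V A v \<longrightarrow>
        card {B. is_block V A B \<and> v \<in> B} = 2 \<and> \<delta> v = deg A v + 2) \<and>
     card {v\<in>V. cut_vertex V A v} \<le> 1"

definition contains_via ::
  "'v set \<Rightarrow> ('v \<times> 'v) set \<Rightarrow> ('v \<times> 'v \<Rightarrow> 'v \<times> 'v) \<Rightarrow> ('v \<times> 'v) set \<Rightarrow> ('v \<Rightarrow> nat) \<Rightarrow>
   'w set \<Rightarrow> ('w \<times> 'w) set \<Rightarrow> ('w \<times> 'w \<Rightarrow> 'w \<times> 'w) \<Rightarrow> ('v \<Rightarrow> 'w) \<Rightarrow> bool" where
  "contains_via V A rot Out \<delta> VG AG rotG f \<longleftrightarrow>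
     inj_on f V \<and> f ` V \<subseteq> VG \<and>
     (\<forall>(u, w)\<in>A. (f u, f w) \<in> AG) \<and>
     (\<forall>F\<in>faces A rot. F \<noteq> Out \<longrightarrow> map_prod f f ` F \<in> faces AG rotG) \<and>
     (\<forall>v\<in>V. deg AG (f v) = \<delta> v) \<and>
     (\<forall>v\<in>V. cut_vertex V A v \<longrightarrow>
        (\<forall>a b. (f v, a) \<in> AG - map_prod f f ` A \<and> (f v, b) \<in> AG - map_prod f f ` A \<and> a \<noteq> b
               \<longrightarrow> rotG (f v, a) \<noteq> (f v, b)))"

definition induced_via ::
  "'v set \<Rightarrow> ('v \<times> 'v) set \<Rightarrow> ('v \<times> 'v \<Rightarrow> 'v \<times> 'v) \<Rightarrow> ('v \<times> 'v) set \<Rightarrow> ('v \<Rightarrow> nat) \<Rightarrow>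
   'w set \<Rightarrow> ('w \<times> 'w) set \<Rightarrow> ('w \<times> 'w \<Rightarrow> 'w \<times> 'w) \<Rightarrow> ('v \<Rightarrow> 'w) \<Rightarrow> bool" where
  "induced_via V A rot Out \<delta> VG AG rotG f \<longleftrightarrow> contains_via V A rot Out \<delta> VG AG rotG f \<and>
     (\<forall>u\<in>V. \<forall>w\<in>V. (f u, f w) \<in> AG \<longrightarrow> (u, w) \<in> A)"

definition on_outer_boundary ::
  "'v set \<Rightarrow> ('v \<times> 'v) set \<Rightarrow> ('v \<times> 'v) set \<Rightarrow> 'v list \<Rightarrow> bool" where
  "on_outer_boundary V A Out P \<longleftrightarrow> set P \<subseteq> outer_vertices V A Out \<and>
     (\<forall>i. Suc i < length P \<longrightarrow> (P ! i, P ! Suc i) \<in> Out \<or> (P ! Suc i, P ! i) \<in> Out)"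

definition is_cycle :: "'w set \<Rightarrow> ('w \<times> 'w) set \<Rightarrow> 'w list \<Rightarrow> bool" where
  "is_cycle VG AG cs \<longleftrightarrow> 3 \<le> length cs \<and> distinct cs \<and> set cs \<subseteq> VG \<and>
     (\<forall>i<length cs. (cs ! i, cs ! ((i + 1) mod length cs)) \<in> AG)"

definition rot_between :: "('w \<times> 'w \<Rightarrow> 'w \<times> 'w) \<Rightarrow> 'w \<times> 'w \<Rightarrow> 'w \<times> 'w \<Rightarrow> 'w \<times> 'w \<Rightarrow> bool" where
  "rot_between rot d1 d2 d \<longleftrightarrow> (\<exists>j>0. (rot ^^ j) d1 = d \<and> (\<forall>i\<le>j. (rot ^^ i) d1 \<noteq> d2))"

definition cycle_side ::
  "'w set \<Rightarrow> ('w \<times> 'w) set \<Rightarrow> ('w \<times> 'w \<Rightarrow> 'w \<times> 'w) \<Rightarrow> 'w list \<Rightarrow> bool \<Rightarrow> 'w set" where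
  "cycle_side VG AG rotG cs forward = {x \<in> VG - set cs. \<exists>i<length cs. \<exists>y xs.
      (let c = cs ! i; nx = cs ! ((i + 1) mod length cs);
           pv = cs ! ((i + length cs - 1) mod length cs) in
       (c, y) \<in> AG \<and>
       (if forward then rot_between rotG (c, nx) (c, pv) (c, y)
        else rot_between rotG (c, pv) (c, nx) (c, y))) \<and>
      walk_in (VG - set cs) AG xs \<and> hd xs = y \<and> last xs = x}"

definition obstructing_cycle ::
  "'w set \<Rightarrow> ('w \<times> 'w) set \<Rightarrow> ('w \<times> 'w \<Rightarrow> 'w \<times> 'w) \<Rightarrow> 'w list \<Rightarrow> bool" where
  "obstructing_cycle VG AG rotG cs \<longleftrightarrow> is_cycle VG AG cs \<and>
     ((length cs \<le> 4 \<and> 1 \<le> card (cycle_side VG AG rotG cs True) \<and>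
                        1 \<le> card (cycle_side VG AG rotG cs False)) \<or>
      (length cs = 5 \<and> 2 \<le> card (cycle_side VG AG rotG cs True) \<and>
                        2 \<le> card (cycle_side VG AG rotG cs False)))"

end

theory Submission
  imports Defs "HOL-Combinatorics.Transposition"
begin

text \<open>Take a chord, an edge of G between two vertices of Z that is not an edge
  of Z, whose ends are at minimal distance k in Z; then 2 \<le> k \<le> 4.  With a shortest path
  of Z it closes a cycle of length k + 1 in G through vertices of Z, and we show that this
  cycle is obstructing.  At each path vertex, the neighbour that follows the next cycle
  vertex in the rotation of G lies off the cycle, on one side, and the neighbour that
  follows the previous one lies on the other side; minimality of the chord rules out the
  shortcuts that could interfere.  For k = 4 each side needs two vertices: if the five
  rotation successors on one side coincide, their common vertex is not in Z (it would
  shorten the chord), so the path runs along the outer face of Z with a single new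
  neighbour at each inner vertex, which hypothesis (ii) forbids.  The topological input,
  that a vertex met twice by a facial walk is a cut vertex, comes from Euler's formula
  through a genus inequality for maps.\<close>

section \<open>Orbits and cycle counts of permutations of a finite set\<close>

definition orbit_of :: "('a \<Rightarrow> 'a) \<Rightarrow> 'a \<Rightarrow> 'a set" where
  "orbit_of p x = {(p ^^ n) x | n. True}"

definition cycle_count :: "('a \<Rightarrow> 'a) \<Rightarrow> 'a set \<Rightarrow> nat" where
  "cycle_count p D = card (orbit_of p ` D)"

lemma funpow_apply_add: "(f ^^ m) ((f ^^ n) x) = (f ^^ (m + n)) x"
  by (simp add: funpow_add)

lemma orbit_of_self [simp]: "x \<in> orbit_of p x"
  unfolding orbit_of_def by (auto intro: exI[of _ 0])

lemma orbit_of_funpow: "(p ^^ n) x \<in> orbit_of p x"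
  unfolding orbit_of_def by auto

lemma orbit_of_step: "y \<in> orbit_of p x \<Longrightarrow> p y \<in> orbit_of p x"
  unfolding orbit_of_def by (auto intro: exI[of _ "Suc _"])

lemma orbit_of_trans: "y \<in> orbit_of p x \<Longrightarrow> z \<in> orbit_of p y \<Longrightarrow> z \<in> orbit_of p x"
  unfolding orbit_of_def by (auto simp: funpow_apply_add)

lemma orbit_of_least_closed:
  assumes "\<forall>y\<in>S. p y \<in> S" "x \<in> S"
  shows "orbit_of p x \<subseteq> S"
proof -
  have "(p ^^ n) x \<in> S" for n using assms by (induct n) auto
  then show ?thesis unfolding orbit_of_def by auto
qed

lemma funpow_agree_on_closed:
  assumes "\<forall>y\<in>S. p y \<in> S" "\<forall>y\<in>S. q y = p y" "x \<in> S"
  shows "(q ^^ n) x = (p ^^ n) x \<and> (p ^^ n) x \<in> S"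
  using assms by (induct n) auto

lemma orbit_of_agree_on_closed:
  assumes "\<forall>y\<in>S. p y \<in> S" "\<forall>y\<in>S. q y = p y" "x \<in> S"
  shows "orbit_of q x = orbit_of p x"
  using funpow_agree_on_closed[OF assms] unfolding orbit_of_def by auto

lemma funpow_in_bij_betw:
  assumes "bij_betw p D D" "x \<in> D"
  shows "(p ^^ n) x \<in> D"
  using bij_betw_funpow[OF assms(1)] assms(2) bij_betwE by blast

lemma orbit_of_subset:
  assumes "bij_betw p D D" "x \<in> D"
  shows "orbit_of p x \<subseteq> D"
  using funpow_in_bij_betw[OF assms] unfolding orbit_of_def by auto

lemma funpow_eq_imp_period:
  assumes "bij_betw p D D" "x \<in> D" "i \<le> j" "(p ^^ i) x = (p ^^ j) x"
  shows "(p ^^ (j - i)) x = x"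
proof -
  have "(p ^^ i) ((p ^^ (j - i)) x) = (p ^^ i) x" using assms(3,4) by (simp add: funpow_apply_add)
  moreover have "inj_on (p ^^ i) D" using bij_betw_funpow[OF assms(1)] bij_betw_def by blast
  ultimately show ?thesis using funpow_in_bij_betw[OF assms(1,2)] assms(2) by (blast dest: inj_onD)
qed

lemma funpow_period_exists:
  assumes "finite D" "bij_betw p D D" "x \<in> D"
  shows "\<exists>n>0. (p ^^ n) x = x"
proof -
  have "\<not> inj_on (\<lambda>n. (p ^^ n) x) {0..card D}"
  proof
    assume "inj_on (\<lambda>n. (p ^^ n) x) {0..card D}"
    then have "card ((\<lambda>n. (p ^^ n) x) ` {0..card D}) = Suc (card D)"
      by (simp add: card_image)
    moreover have "(\<lambda>n. (p ^^ n) x) ` {0..card D} \<subseteq> D"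
      using funpow_in_bij_betw[OF assms(2,3)] by blast
    then have "card ((\<lambda>n. (p ^^ n) x) ` {0..card D}) \<le> card D"
      by (intro card_mono assms(1))
    ultimately show False by simp
  qed
  then obtain i j where ij: "i < j" "(p ^^ i) x = (p ^^ j) x"
    unfolding inj_on_def by (metis linorder_neqE_nat)
  then have "(p ^^ (j - i)) x = x" using funpow_eq_imp_period[OF assms(2,3)] by simp
  then show ?thesis using ij by (intro exI[of _ "j - i"]) auto
qed

lemma orbit_of_sym:
  assumes "finite D" "bij_betw p D D" "x \<in> D" "y \<in> orbit_of p x"
  shows "x \<in> orbit_of p y"
proof -
  obtain L where L: "L > 0" "(p ^^ L) x = x" using funpow_period_exists[OF assms(1-3)] by blast
  obtain n where n: "y = (p ^^ n) x" using assms(4) unfolding orbit_of_def by auto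
  have "(L - n mod L + n) mod L = 0"
    using L(1) by (metis add.commute le_add_diff_inverse2 mod_add_right_eq mod_le_divisor mod_self)
  then have "(p ^^ (L - n mod L)) y = x"
    using funpow_mod_eq[OF L(2), of "L - n mod L + n"] by (simp add: n funpow_add)
  then show ?thesis using orbit_of_funpow by metis
qed

lemma orbit_of_eq:
  assumes "finite D" "bij_betw p D D" "x \<in> D" "y \<in> orbit_of p x"
  shows "orbit_of p y = orbit_of p x"
  using orbit_of_trans[OF assms(4)] orbit_of_trans[OF orbit_of_sym[OF assms]] by blast

lemma orbit_of_enumerate:
  assumes D: "finite D" "bij_betw p D D" "x \<in> D"
  defines "L \<equiv> LEAST L. 0 < L \<and> (p ^^ L) x = x"
  shows "orbit_of p x = (\<lambda>k. (p ^^ k) x) ` {..<L}" "card (orbit_of p x) = L"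
    "0 < L" "(p ^^ L) x = x"
proof -
  have ex: "\<exists>L>0. (p ^^ L) x = x" using funpow_period_exists[OF D] .
  show L: "0 < L" "(p ^^ L) x = x" using LeastI_ex[OF ex] unfolding L_def by auto
  have Lmin: "\<And>m. 0 < m \<Longrightarrow> m < L \<Longrightarrow> (p ^^ m) x \<noteq> x"
    using not_less_Least unfolding L_def by blast
  show orbit: "orbit_of p x = (\<lambda>k. (p ^^ k) x) ` {..<L}"
  proof
    show "orbit_of p x \<subseteq> (\<lambda>k. (p ^^ k) x) ` {..<L}"
    proof
      fix y assume "y \<in> orbit_of p x"
      then obtain m where "y = (p ^^ m) x" unfolding orbit_of_def by auto
      then have "y = (p ^^ (m mod L)) x" using funpow_mod_eq[OF L(2)] by simp
      then show "y \<in> (\<lambda>k. (p ^^ k) x) ` {..<L}" using L(1) by auto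
    qed
  qed (auto simp: orbit_of_def)
  have "inj_on (\<lambda>k. (p ^^ k) x) {..<L}"
  proof (rule ccontr)
    assume "\<not> inj_on (\<lambda>k. (p ^^ k) x) {..<L}"
    then obtain i j where ij: "i < j" "j < L" "(p ^^ i) x = (p ^^ j) x"
      unfolding inj_on_def by (metis lessThan_iff linorder_neqE_nat)
    then have "(p ^^ (j - i)) x = x" using funpow_eq_imp_period[OF D(2,3)] by simp
    then show False using Lmin[of "j - i"] ij by simp
  qed
  then show "card (orbit_of p x) = L" using orbit by (simp add: card_image)
qed

lemma cycle_count_cong:
  assumes "bij_betw p D D" "\<forall>x\<in>D. p' x = p x"
  shows "cycle_count p' D = cycle_count p D"
proof -
  have closed: "\<forall>y\<in>D. p y \<in> D" using assms(1) bij_betwE by blast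
  have "orbit_of p' x = orbit_of p x" if "x \<in> D" for x
    by (rule orbit_of_agree_on_closed[OF closed assms(2) that])
  then have "orbit_of p' ` D = orbit_of p ` D" by (rule image_cong[OF refl])
  then show ?thesis unfolding cycle_count_def by simp
qed

text \<open>Composing a permutation with the transposition of two points merges their
  cycles if they lie in different cycles, and splits their common cycle otherwise.\<close>

context
  fixes D :: "'a set" and p :: "'a \<Rightarrow> 'a" and a b :: 'a
  assumes D: "finite D" "bij_betw p D D" and ab: "a \<in> D" "b \<in> D" "b \<notin> orbit_of p a"
begin

lemma orbit_of_transpose_subset:
  "orbit_of (p \<circ> transpose a b) a \<subseteq> orbit_of p a \<union> orbit_of p b"
proof (rule orbit_of_least_closed)
  show "\<forall>y\<in>orbit_of p a \<union> orbit_of p b. (p \<circ> transpose a b) y \<in> orbit_of p a \<union> orbit_of p b"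
  proof
    fix y assume y: "y \<in> orbit_of p a \<union> orbit_of p b"
    have "(p \<circ> transpose a b) y \<in> {p y, p a, p b}" by (auto simp: transpose_def)
    then show "(p \<circ> transpose a b) y \<in> orbit_of p a \<union> orbit_of p b"
      using y orbit_of_step[of y p a] orbit_of_step[of y p b]
        orbit_of_step[OF orbit_of_self, of p a] orbit_of_step[OF orbit_of_self, of p b] by auto
  qed
qed simp

lemma transpose_orbit_reaches: "b \<in> orbit_of (p \<circ> transpose a b) a"
proof -
  define q where "q = p \<circ> transpose a b"
  have a_notin_b: "a \<notin> orbit_of p b"
    using orbit_of_sym[OF D ab(2), of a] ab(3) by blast
  have "(p ^^ n) (p b) \<in> orbit_of q a \<or> b \<in> orbit_of q a" for n
  proof (induct n)
    case 0
    have "q a = p b" by (simp add: q_def)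
    then show ?case using orbit_of_step[OF orbit_of_self, of q a] by simp
  next
    case (Suc n)
    show ?case
    proof (cases "b \<in> orbit_of q a")
      case False
      then have T: "(p ^^ n) (p b) \<in> orbit_of q a" using Suc by auto
      have "(p ^^ n) (p b) \<in> orbit_of p b"
        by (metis funpow_Suc_right o_apply orbit_of_funpow)
      then have "(p ^^ n) (p b) \<noteq> a" "(p ^^ n) (p b) \<noteq> b" using a_notin_b T False by auto
      then have "q ((p ^^ n) (p b)) = (p ^^ Suc n) (p b)" by (simp add: q_def)
      then show ?thesis using orbit_of_step[OF T] by simp
    qed simp
  qed
  moreover have "b \<in> orbit_of p (p b)"
    using orbit_of_sym[OF D, of b "p b"] ab(2) orbit_of_step[OF orbit_of_self, of p b] by blast
  then obtain m where "b = (p ^^ m) (p b)" unfolding orbit_of_def by auto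
  ultimately show ?thesis unfolding q_def by metis
qed

lemma orbit_of_transpose_merge:
  "orbit_of (p \<circ> transpose a b) a = orbit_of p a \<union> orbit_of p b"
proof
  let ?q = "p \<circ> transpose a b"
  let ?T = "orbit_of ?q a"
  have bT: "b \<in> ?T" by (rule transpose_orbit_reaches)
  have "orbit_of p b \<subseteq> ?T \<inter> orbit_of p b"
  proof (rule orbit_of_least_closed)
    show "\<forall>y\<in>?T \<inter> orbit_of p b. p y \<in> ?T \<inter> orbit_of p b"
    proof
      fix y assume y: "y \<in> ?T \<inter> orbit_of p b"
      have "y \<noteq> a" using y orbit_of_sym[OF D ab(2), of a] ab(3) by blast
      then have "p y = ?q y \<or> y = b" by auto
      moreover have "p b = ?q a" by simp
      ultimately show "p y \<in> ?T \<inter> orbit_of p b"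
        using y orbit_of_step[of y ?q a] orbit_of_step[OF orbit_of_self, of ?q a]
          orbit_of_step[of y p b] by auto
    qed
  qed (use bT in auto)
  moreover have "orbit_of p a \<subseteq> ?T \<inter> orbit_of p a"
  proof (rule orbit_of_least_closed)
    show "\<forall>y\<in>?T \<inter> orbit_of p a. p y \<in> ?T \<inter> orbit_of p a"
    proof
      fix y assume y: "y \<in> ?T \<inter> orbit_of p a"
      have "y \<noteq> b" using y ab(3) by auto
      then have "p y = ?q y \<or> y = a" by auto
      moreover have "p a = ?q b" by simp
      ultimately show "p y \<in> ?T \<inter> orbit_of p a"
        using y orbit_of_step[of y ?q a] orbit_of_step[OF bT] orbit_of_step[of y p a] by auto
    qed
  qed auto
  ultimately show "orbit_of p a \<union> orbit_of p b \<subseteq> ?T" by blast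
qed (rule orbit_of_transpose_subset)

lemma orbit_of_transpose_other:
  assumes x: "x \<in> D" "x \<notin> orbit_of p a \<union> orbit_of p b"
  shows "orbit_of (p \<circ> transpose a b) x = orbit_of p x"
proof (rule orbit_of_agree_on_closed)
  show "\<forall>y\<in>orbit_of p x. (p \<circ> transpose a b) y = p y"
  proof
    fix y assume y: "y \<in> orbit_of p x"
    have "x \<in> orbit_of p y" by (rule orbit_of_sym[OF D x(1) y])
    then have "y \<noteq> a" "y \<noteq> b" using x(2) by auto
    then show "(p \<circ> transpose a b) y = p y" by simp
  qed
qed (auto intro: orbit_of_step)

lemma orbits_transpose_merge:
  "orbit_of (p \<circ> transpose a b) ` D
     = insert (orbit_of p a \<union> orbit_of p b) (orbit_of p ` D - {orbit_of p a, orbit_of p b})"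
    (is "_ = insert ?ab (?S - _)")
proof (intro set_eqI iffI)
  let ?q = "p \<circ> transpose a b"
  have qD: "bij_betw ?q D D" by (rule bij_betw_trans[OF _ D(2)]) (simp add: ab)
  fix X
  assume "X \<in> orbit_of ?q ` D"
  then obtain x where x: "x \<in> D" "X = orbit_of ?q x" by auto
  show "X \<in> insert ?ab (?S - {orbit_of p a, orbit_of p b})"
  proof (cases "x \<in> ?ab")
    case True
    then have "orbit_of ?q x = orbit_of ?q a"
      using orbit_of_transpose_merge by (intro orbit_of_eq[OF D(1) qD ab(1)]) simp
    then show ?thesis using x orbit_of_transpose_merge by simp
  next
    case False
    then have "orbit_of p x \<noteq> orbit_of p a" "orbit_of p x \<noteq> orbit_of p b"
      using orbit_of_self[of x p] by blast+
    then show ?thesis using x orbit_of_transpose_other[OF x(1) False] by auto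
  qed
next
  fix X assume X: "X \<in> insert ?ab (?S - {orbit_of p a, orbit_of p b})"
  show "X \<in> orbit_of (p \<circ> transpose a b) ` D"
  proof (cases "X = ?ab")
    case True then show ?thesis using orbit_of_transpose_merge ab(1) by auto
  next
    case False
    then obtain x where x: "x \<in> D" "X = orbit_of p x" "X \<noteq> orbit_of p a" "X \<noteq> orbit_of p b"
      using X by auto
    then have "x \<notin> ?ab"
      using orbit_of_eq[OF D ab(1), of x] orbit_of_eq[OF D ab(2), of x] by blast
    then show ?thesis using orbit_of_transpose_other[OF x(1)] x by auto
  qed
qed

lemma cycle_count_transpose_merge:
  "cycle_count (p \<circ> transpose a b) D + 1 = cycle_count p D"
proof -
  let ?S = "orbit_of p ` D" and ?ab = "orbit_of p a \<union> orbit_of p b"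
  have "?ab \<notin> ?S - {orbit_of p a, orbit_of p b}"
  proof
    assume "?ab \<in> ?S - {orbit_of p a, orbit_of p b}"
    then obtain x where x: "x \<in> D" "?ab = orbit_of p x" "orbit_of p x \<noteq> orbit_of p a"
      by blast
    then have "a \<in> orbit_of p x" using orbit_of_self[of a p] by blast
    then show False using orbit_of_eq[OF D x(1)] x(3) by metis
  qed
  moreover have "card (?S - {orbit_of p a, orbit_of p b}) + 2 = card ?S"
  proof -
    have sub: "{orbit_of p a, orbit_of p b} \<subseteq> ?S" using ab(1,2) by auto
    have "orbit_of p a \<noteq> orbit_of p b" using ab(3) orbit_of_self[of b p] by blast
    then have "card {orbit_of p a, orbit_of p b} = 2" by simp
    moreover have "card {orbit_of p a, orbit_of p b} \<le> card ?S"
      using D(1) by (intro card_mono[OF _ sub]) simp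
    moreover have "card (?S - {orbit_of p a, orbit_of p b}) = card ?S - 2"
      using card_Diff_subset[OF _ sub] calculation(1) by simp
    ultimately show ?thesis by linarith
  qed
  ultimately show ?thesis unfolding cycle_count_def orbits_transpose_merge using D(1) by simp
qed

end

lemma transpose_splits_orbit:
  assumes D: "finite D" "bij_betw p D D"
    and ab: "a \<in> D" "b \<in> D" "a \<noteq> b" "b \<in> orbit_of p a"
  shows "b \<notin> orbit_of (p \<circ> transpose a b) a"
proof
  define q where "q = p \<circ> transpose a b"
  assume "b \<in> orbit_of (p \<circ> transpose a b) a"
  then have bq: "b \<in> orbit_of q a" by (simp add: q_def)
  define L where "L = (LEAST L. 0 < L \<and> (p ^^ L) a = a)"
  note period = orbit_of_enumerate[OF D ab(1), folded L_def]
  have Lmin: "\<And>m. 0 < m \<Longrightarrow> m < L \<Longrightarrow> (p ^^ m) a \<noteq> a"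
    using not_less_Least unfolding L_def by blast
  obtain n where bn: "b = (p ^^ n) a" and nL: "n < L" using ab(4) period(1) by auto
  have n0: "0 < n" using bn ab(3) by (cases n) auto
  have b_once: "(p ^^ m) a \<noteq> b" if "n < m" "m < L" for m
  proof
    assume "(p ^^ m) a = b"
    then have "(p ^^ (m - n)) a = a"
      using funpow_eq_imp_period[OF D(2) ab(1), of n m] that bn by simp
    then show False using Lmin[of "m - n"] that by simp
  qed
  text \<open>The orbit of a under q is the arc of p's cycle from the successor of b back to a.\<close>
  define T where "T = {(p ^^ m) a | m. n < m \<and> m \<le> L}"
  have aT: "a \<in> T" unfolding T_def using nL period(4) by (intro CollectI exI[of _ L]) auto
  have "\<forall>y\<in>T. q y \<in> T"
  proof
    fix y assume "y \<in> T"
    then obtain m where m: "y = (p ^^ m) a" "n < m" "m \<le> L" unfolding T_def by auto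
    show "q y \<in> T"
    proof (cases "m = L")
      case True
      then have "q y = (p ^^ Suc n) a" using m period(4) bn ab(3) by (simp add: q_def)
      then show ?thesis unfolding T_def using nL by (auto intro!: exI[of _ "Suc n"])
    next
      case False
      then have "y \<noteq> a" "y \<noteq> b" using Lmin[of m] b_once[of m] m n0 by auto
      then have "q y = (p ^^ Suc m) a" using m by (simp add: q_def)
      then show ?thesis unfolding T_def using False m by (auto intro!: exI[of _ "Suc m"])
    qed
  qed
  then have "b \<in> T" using orbit_of_least_closed[OF _ aT] bq by blast
  then obtain m where "b = (p ^^ m) a" "n < m" "m \<le> L" unfolding T_def by auto
  then show False using b_once[of m] period(4) ab(3) by (cases "m = L") auto
qed

lemma cycle_count_transpose_split:
  assumes D: "finite D" "bij_betw p D D"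
    and ab: "a \<in> D" "b \<in> D" "a \<noteq> b" "b \<in> orbit_of p a"
  shows "cycle_count (p \<circ> transpose a b) D = cycle_count p D + 1"
proof -
  define q where "q = p \<circ> transpose a b"
  have qD: "bij_betw q D D" unfolding q_def by (rule bij_betw_trans[OF _ D(2)]) (simp add: ab)
  have "b \<notin> orbit_of q a" using transpose_splits_orbit[OF assms] q_def by simp
  from cycle_count_transpose_merge[OF D(1) qD ab(1,2) this]
  show ?thesis by (simp add: q_def comp_assoc)
qed

section \<open>A genus inequality for maps\<close>

text \<open>A map is given by a permutation al of a finite dart set D together with a
  fixed-point-free involution s of D; composing al with s restricted to a set M of darts
  closed under s gives the face permutation of the submap with edge darts M.\<close>

definition restrict_id :: "('a \<Rightarrow> 'a) \<Rightarrow> 'a set \<Rightarrow> 'a \<Rightarrow> 'a" where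
  "restrict_id s M x = (if x \<in> M then s x else x)"

definition dart_links :: "('a \<Rightarrow> 'a) \<Rightarrow> 'a set \<Rightarrow> ('a \<Rightarrow> 'a) \<Rightarrow> 'a set \<Rightarrow> ('a \<times> 'a) set" where
  "dart_links al D s M = {(x, al x) | x. x \<in> D} \<union> {(al x, x) | x. x \<in> D} \<union> {(x, s x) | x. x \<in> M}"

definition component_count :: "('a \<times> 'a) set \<Rightarrow> 'a set \<Rightarrow> nat" where
  "component_count S D = card ((\<lambda>x. S\<^sup>* `` {x}) ` D)"

lemma rtrancl_Image_eq:
  assumes "sym S" "(x, y) \<in> S\<^sup>*"
  shows "S\<^sup>* `` {x} = S\<^sup>* `` {y}"
proof -
  have "(y, x) \<in> S\<^sup>*" using sym_rtrancl[OF assms(1)] assms(2) by (rule symD)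
  then show ?thesis using assms(2) by (auto intro: rtrancl_trans)
qed

lemma rtrancl_insert_edge_cases:
  assumes "sym S" and "(x, y) \<in> (S \<union> {(d, e), (e, d)})\<^sup>*"
  shows "(x, y) \<in> S\<^sup>* \<or> ((x, d) \<in> S\<^sup>* \<and> (e, y) \<in> S\<^sup>*) \<or> ((x, e) \<in> S\<^sup>* \<and> (d, y) \<in> S\<^sup>*)"
  using assms(2)
proof induct
  case (step y z)
  have sym_star: "(u, v) \<in> S\<^sup>* \<Longrightarrow> (v, u) \<in> S\<^sup>*" for u v
    using sym_rtrancl[OF assms(1)] by (rule symD)
  from step(2) consider "(y, z) \<in> S" | "y = d" "z = e" | "y = e" "z = d" by auto
  then show ?case
    using step(3) by cases (auto intro: rtrancl_into_rtrancl sym_star)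
qed simp

lemma component_count_insert_edge:
  assumes sym: "sym S" and fin: "finite D"
  shows "component_count S D \<le> component_count (S \<union> {(d, e), (e, d)}) D + 1"
proof -
  let ?S' = "S \<union> {(d, e), (e, d)}"
  let ?C = "(\<lambda>x. S\<^sup>* `` {x}) ` D" and ?C' = "(\<lambda>x. ?S'\<^sup>* `` {x}) ` D"
  define F where "F X = ?S'\<^sup>* `` X" for X
  have sub: "S\<^sup>* \<subseteq> ?S'\<^sup>*" by (rule rtrancl_mono) auto
  have F_class: "F (S\<^sup>* `` {x}) = ?S'\<^sup>* `` {x}" for x
    unfolding F_def using sub by (auto intro: rtrancl_trans)
  text \<open>Only the class of e can be merged into another one.\<close>
  have "inj_on F (?C - {S\<^sup>* `` {e}})"
  proof (rule inj_onI)
    fix X Y assume X: "X \<in> ?C - {S\<^sup>* `` {e}}" and Y: "Y \<in> ?C - {S\<^sup>* `` {e}}" and "F X = F Y"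
    obtain x y where xy: "X = S\<^sup>* `` {x}" "Y = S\<^sup>* `` {y}" using X Y by auto
    then have "(x, y) \<in> ?S'\<^sup>*" using \<open>F X = F Y\<close> F_class by auto
    from rtrancl_insert_edge_cases[OF sym this] show "X = Y"
    proof (elim disjE conjE)
      assume "(x, y) \<in> S\<^sup>*"
      then show ?thesis using rtrancl_Image_eq[OF sym] xy by simp
    next
      assume "(e, y) \<in> S\<^sup>*"
      then show ?thesis using rtrancl_Image_eq[OF sym] xy Y by simp
    next
      assume "(x, e) \<in> S\<^sup>*"
      then show ?thesis using rtrancl_Image_eq[OF sym] xy X by simp
    qed
  qed
  moreover have "F ` (?C - {S\<^sup>* `` {e}}) \<subseteq> ?C'" using F_class by auto
  ultimately have "card (?C - {S\<^sup>* `` {e}}) \<le> card ?C'"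
    using fin by (intro card_inj_on_le) auto
  moreover have "card ?C \<le> card (?C - {S\<^sup>* `` {e}}) + 1"
    using fin by (simp add: card_Diff_singleton_if, linarith)
  ultimately show ?thesis unfolding component_count_def by simp
qed

lemma bij_betw_restrict_id:
  assumes "\<forall>x\<in>M. s x \<in> M \<and> s (s x) = x" and "M \<subseteq> D"
  shows "bij_betw (restrict_id s M) D D"
proof -
  have inv: "restrict_id s M (restrict_id s M x) = x" for x
    using assms by (auto simp: restrict_id_def)
  have "restrict_id s M ` D \<subseteq> D" using assms by (auto simp: restrict_id_def)
  then show ?thesis by (intro bij_betw_byWitness[where f' = "restrict_id s M"]) (auto simp: inv)
qed

lemma sym_dart_links:
  assumes "\<forall>x\<in>M. s x \<in> M \<and> s (s x) = x"
  shows "sym (dart_links al D s M)"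
proof (rule symI)
  fix x y assume "(x, y) \<in> dart_links al D s M"
  then consider "x \<in> D" "y = al x" | "y \<in> D" "x = al y" | "x \<in> M" "y = s x"
    unfolding dart_links_def by auto
  then show "(y, x) \<in> dart_links al D s M"
  proof cases
    case 3
    then have "s y = x" "y \<in> M" using assms by auto
    then show ?thesis unfolding dart_links_def by blast
  qed (auto simp: dart_links_def)
qed

lemma orbit_of_rtrancl:
  assumes "\<forall>x\<in>D. (x, q x) \<in> S\<^sup>* \<and> q x \<in> D" "x \<in> D" "y \<in> orbit_of q x"
  shows "(x, y) \<in> S\<^sup>*"
proof -
  obtain n where n: "y = (q ^^ n) x" using assms(3) unfolding orbit_of_def by auto
  have "(x, (q ^^ n) x) \<in> S\<^sup>* \<and> (q ^^ n) x \<in> D" for n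
    by (induct n) (use assms in \<open>auto intro: rtrancl_trans\<close>)
  then show ?thesis using n by simp
qed

lemma component_count_dart_links_empty:
  assumes "finite D" "bij_betw al D D"
  shows "component_count (dart_links al D s {}) D = cycle_count al D"
proof -
  let ?R = "dart_links al D s {}"
  have "?R\<^sup>* `` {x} = orbit_of al x" if x: "x \<in> D" for x
  proof
    show "?R\<^sup>* `` {x} \<subseteq> orbit_of al x"
    proof
      fix y assume "y \<in> ?R\<^sup>* `` {x}"
      then have "(x, y) \<in> ?R\<^sup>*" by simp
      then show "y \<in> orbit_of al x"
      proof induct
        case (step y z)
        then consider "z = al y" | "z \<in> D" "y = al z" unfolding dart_links_def by auto
        then show ?case
        proof cases
          case 1
          then show ?thesis using orbit_of_step[OF step(3)] by simp
        next
          case 2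
          have "z \<in> orbit_of al (al z)"
            by (rule orbit_of_sym[OF assms 2(1) orbit_of_step[OF orbit_of_self]])
          then show ?thesis using orbit_of_trans[OF step(3)[unfolded 2(2)]] by blast
        qed
      qed simp
    qed
  next
    have links: "\<forall>y\<in>D. (y, al y) \<in> ?R\<^sup>* \<and> al y \<in> D"
      using assms(2) unfolding dart_links_def by (auto dest: bij_betwE)
    show "orbit_of al x \<subseteq> ?R\<^sup>* `` {x}"
      using orbit_of_rtrancl[OF links x] by blast
  qed
  then have "(\<lambda>x. ?R\<^sup>* `` {x}) ` D = orbit_of al ` D" by auto
  then show ?thesis unfolding component_count_def cycle_count_def by simp
qed

context
  fixes D :: "'a set" and al s :: "'a \<Rightarrow> 'a"
  assumes fin: "finite D" and al: "bij_betw al D D"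
    and s: "\<forall>x\<in>D. s x \<in> D \<and> s x \<noteq> x \<and> s (s x) = x"
begin

lemma bij_betw_face_permutation:
  assumes "M \<subseteq> D" "\<forall>x\<in>M. s x \<in> M"
  shows "bij_betw (al \<circ> restrict_id s M) D D"
  using bij_betw_restrict_id[of M s D] assms s al by (intro bij_betw_trans) auto

lemma face_permutation_step_linked:
  assumes "M \<subseteq> D" "x \<in> D"
  shows "(x, (al \<circ> restrict_id s M) x) \<in> (dart_links al D s M)\<^sup>*"
proof -
  have "(x, restrict_id s M x) \<in> (dart_links al D s M)\<^sup>*"
    unfolding restrict_id_def dart_links_def by auto
  moreover have "restrict_id s M x \<in> D" using assms s by (auto simp: restrict_id_def)
  ultimately show ?thesis unfolding dart_links_def by (auto intro: rtrancl_into_rtrancl)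
qed

text \<open>Adding the edge {d, s d} to the submap with edge darts M either splits a face
  without changing the components, or merges two faces and at most two components.\<close>

lemma insert_edge_count_bound:
  assumes M: "M \<subseteq> D" "\<forall>x\<in>M. s x \<in> M" and d: "d \<in> D" "d \<notin> M"
  defines "M' \<equiv> insert d (insert (s d) M)"
  shows "cycle_count (al \<circ> restrict_id s M') D + 2 * component_count (dart_links al D s M) D
    \<le> cycle_count (al \<circ> restrict_id s M) D + 1 + 2 * component_count (dart_links al D s M') D"
proof -
  define p where "p = al \<circ> restrict_id s M"
  have sd: "s d \<in> D" "s d \<noteq> d" "s d \<notin> M" using s d M(2) by metis+
  have pD: "bij_betw p D D" unfolding p_def by (rule bij_betw_face_permutation[OF M])
  have p_M': "al \<circ> restrict_id s M' = p \<circ> transpose d (s d)"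
    unfolding p_def M'_def using d sd s by (intro ext) (auto simp: restrict_id_def transpose_def)
  have sym: "sym (dart_links al D s M)" using M s by (intro sym_dart_links) auto
  have links_M': "dart_links al D s M' = dart_links al D s M \<union> {(d, s d), (s d, d)}"
    unfolding dart_links_def M'_def using d s by auto
  have components: "component_count (dart_links al D s M) D
      \<le> component_count (dart_links al D s M') D + 1"
    unfolding links_M' by (rule component_count_insert_edge[OF sym fin])
  show ?thesis
  proof (cases "s d \<in> orbit_of p d")
    case True
    have "\<forall>x\<in>D. (x, p x) \<in> (dart_links al D s M)\<^sup>* \<and> p x \<in> D"
      using face_permutation_step_linked[OF M(1)] bij_betwE[OF pD] unfolding p_def by blast
    then have "(d, s d) \<in> (dart_links al D s M)\<^sup>*" using d(1) True by (rule orbit_of_rtrancl)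
    then have "(dart_links al D s M')\<^sup>* = (dart_links al D s M)\<^sup>*"
      unfolding links_M' using symD[OF sym_rtrancl[OF sym]]
      by (intro rtrancl_subset) auto
    then show ?thesis
      using cycle_count_transpose_split[OF fin pD d(1) sd(1) sd(2)[symmetric] True]
      unfolding p_M' component_count_def p_def by simp
  next
    case False
    then show ?thesis
      using cycle_count_transpose_merge[OF fin pD d(1) sd(1) False] components
      unfolding p_M' p_def by simp
  qed
qed

text \<open>Euler's inequality V - E + F \<le> 2 C for the submap with edge darts M, whose vertices
  and faces are the cycles of al and of al \<circ> restrict_id s M.\<close>

theorem genus_inequality:
  "M \<subseteq> D \<Longrightarrow> \<forall>x\<in>M. s x \<in> M \<Longrightarrow>
    2 * (cycle_count (al \<circ> restrict_id s M) D + cycle_count al D)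
      \<le> 4 * component_count (dart_links al D s M) D + card M"
proof (induct "card M" arbitrary: M rule: less_induct)
  case (less M)
  show ?case
  proof (cases "M = {}")
    case True
    then have "al \<circ> restrict_id s M = al" by (auto simp: restrict_id_def)
    then show ?thesis using component_count_dart_links_empty[OF fin al, of s] True by simp
  next
    case False
    then obtain d where d: "d \<in> M" by auto
    define M0 where "M0 = M - {d, s d}"
    have sd: "s d \<in> M" "s d \<noteq> d" "s (s d) = d" using d less(2,3) s by auto
    have M: "M = insert d (insert (s d) M0)" using d sd unfolding M0_def by auto
    have M0D: "M0 \<subseteq> D" "d \<in> D" "d \<notin> M0" "s d \<notin> M0" using less(2) d unfolding M0_def by auto
    have M0s: "\<forall>x\<in>M0. s x \<in> M0"
    proof
      fix x assume "x \<in> M0"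
      then have x: "x \<in> M" "x \<noteq> d" "x \<noteq> s d" "s (s x) = x" using less(2) s unfolding M0_def by auto
      then have "s x \<noteq> d" "s x \<noteq> s d" using sd(3) by metis+
      then show "s x \<in> M0" using x(1) less(3) unfolding M0_def by blast
    qed
    have "finite M0" using M0D(1) fin finite_subset by blast
    then have card_M: "card M = card M0 + 2" using M sd(2) M0D(3,4) by simp
    have "2 * (cycle_count (al \<circ> restrict_id s M0) D + cycle_count al D)
        \<le> 4 * component_count (dart_links al D s M0) D + card M0"
      using less(1)[OF _ M0D(1) M0s] card_M by simp
    then show ?thesis
      using insert_edge_count_bound[OF M0D(1) M0s M0D(2,3)] card_M unfolding M[symmetric] by simp
  qed
qed

corollary genus_inequality_connected:
  assumes conn: "x0 \<in> D" "\<forall>x\<in>D. (x, x0) \<in> (dart_links al D s D)\<^sup>*"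
  shows "2 * (cycle_count (al \<circ> restrict_id s D) D + cycle_count al D) \<le> 4 + card D"
proof -
  let ?R = "dart_links al D s D"
  have sym: "sym ?R" by (rule sym_dart_links) (use s in auto)
  have "?R\<^sup>* `` {x} = ?R\<^sup>* `` {x0}" if "x \<in> D" for x
    using rtrancl_Image_eq[OF sym conn(2)[rule_format, OF that]] .
  then have "(\<lambda>x. ?R\<^sup>* `` {x}) ` D = (\<lambda>_. ?R\<^sup>* `` {x0}) ` D"
    by (rule image_cong[OF refl])
  also have "\<dots> = {?R\<^sup>* `` {x0}}" using conn(1) by (rule image_constant)
  finally have "component_count ?R D = 1" unfolding component_count_def by simp
  then show ?thesis using genus_inequality[of D] s by auto
qed

end

section \<open>Walks, distances and cycles\<close>

lemma walk_in_tl: "walk_in S A (x # xs) \<Longrightarrow> xs \<noteq> [] \<Longrightarrow> walk_in S A xs"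
  unfolding walk_in_def by (auto simp flip: nth_Cons_Suc)

lemma walk_in_Cons2: "walk_in S A (x # y # xs) \<Longrightarrow> (x, y) \<in> A"
  unfolding walk_in_def by force

lemma is_walk_single [simp]: "is_walk A [x]"
  by (simp add: is_walk_def)

lemma is_walk_Cons2 [simp]: "is_walk A (x # y # xs) \<longleftrightarrow> (x, y) \<in> A \<and> is_walk A (y # xs)"
  unfolding is_walk_def by (auto simp: nth_Cons' less_Suc_eq_0_disj)

lemma walk_in_is_walk: "walk_in S A xs \<Longrightarrow> is_walk A xs"
  unfolding walk_in_def is_walk_def by simp

lemma dist_le_walk:
  assumes "is_walk A xs" "hd xs = u" "last xs = w"
  shows "dist A u w \<le> length xs - 1"
proof -
  have "length xs = Suc (length xs - 1)" using assms(1) unfolding is_walk_def by (cases xs) auto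
  then show ?thesis unfolding dist_def using assms by (intro Least_le) blast
qed

lemma shortest_walk_exists:
  assumes "is_walk A xs" "hd xs = u" "last xs = w"
  obtains ys where "is_walk A ys" "hd ys = u" "last ys = w" "length ys = Suc (dist A u w)"
proof -
  have "length xs = Suc (length xs - 1)" using assms(1) unfolding is_walk_def by (cases xs) auto
  then have "\<exists>n. \<exists>xs. is_walk A xs \<and> hd xs = u \<and> last xs = w \<and> length xs = Suc n"
    using assms by blast
  then have "\<exists>ys. is_walk A ys \<and> hd ys = u \<and> last ys = w \<and> length ys = Suc (dist A u w)"
    unfolding dist_def by (rule LeastI_ex)
  then show ?thesis using that by blast
qed

lemma is_cycle_of_walk:
  assumes "distinct cs" "3 \<le> length cs" "set cs \<subseteq> VG" "is_walk AG cs" "(last cs, hd cs) \<in> AG"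
  shows "is_cycle VG AG cs"
  unfolding is_cycle_def
proof (intro conjI allI impI)
  fix i assume i: "i < length cs"
  show "(cs ! i, cs ! ((i + 1) mod length cs)) \<in> AG"
  proof (cases "Suc i < length cs")
    case True then show ?thesis using assms(4) unfolding is_walk_def by simp
  next
    case False
    then have "Suc i = length cs" using i by simp
    then have "i = length cs - 1" "(i + 1) mod length cs = 0" by auto
    moreover have "cs \<noteq> []" using i by auto
    ultimately show ?thesis using assms(5) by (simp add: last_conv_nth hd_conv_nth)
  qed
qed (use assms in auto)

lemma on_outer_boundary_rev:
  assumes "on_outer_boundary V A Out (rev P)"
  shows "on_outer_boundary V A Out P"
  unfolding on_outer_boundary_def
proof (intro conjI allI impI)
  show "set P \<subseteq> outer_vertices V A Out" using assms unfolding on_outer_boundary_def by simp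
  fix i assume i: "Suc i < length P"
  define k where "k = length P - Suc (Suc i)"
  have "Suc k < length (rev P)" "rev P ! k = P ! Suc i" "rev P ! Suc k = P ! i"
    using i by (auto simp: k_def rev_nth Suc_diff_Suc)
  then show "(P ! i, P ! Suc i) \<in> Out \<or> (P ! Suc i, P ! i) \<in> Out"
    using assms unfolding on_outer_boundary_def by metis
qed

lemma rev_nth_cyclic:
  assumes "i < length cs"
  defines "n \<equiv> length cs"
  shows "rev cs ! (n - 1 - i) = cs ! i"
    and "rev cs ! ((n - 1 - i + 1) mod n) = cs ! ((i + n - 1) mod n)"
    and "rev cs ! ((n - 1 - i + n - 1) mod n) = cs ! ((i + 1) mod n)"
proof -
  show "rev cs ! (n - 1 - i) = cs ! i" using assms by (simp add: rev_nth)
  show "rev cs ! ((n - 1 - i + 1) mod n) = cs ! ((i + n - 1) mod n)"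
  proof (cases i)
    case 0 then show ?thesis using assms by (simp add: rev_nth)
  next
    case (Suc k)
    then have "(n - 1 - i + 1) mod n = n - 1 - k" "(i + n - 1) mod n = k" using assms by auto
    then show ?thesis using assms Suc by (simp add: rev_nth)
  qed
  show "rev cs ! ((n - 1 - i + n - 1) mod n) = cs ! ((i + 1) mod n)"
  proof (cases "Suc i = n")
    case True then show ?thesis using assms by (simp add: rev_nth)
  next
    case False
    then have "(n - 1 - i + n - 1) mod n = n - 1 - Suc i" "(i + 1) mod n = Suc i"
      using assms by (auto simp: mod_if)
    then show ?thesis using assms False by (simp add: rev_nth)
  qed
qed

lemma cycle_side_rev: "cycle_side VG AG R (rev cs) True = cycle_side VG AG R cs False"
proof -
  let ?n = "length cs"
  let ?nx = "\<lambda>i. (i + 1) mod ?n" and ?pv = "\<lambda>i. (i + ?n - 1) mod ?n"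
  have "(\<exists>j<?n. P (rev cs ! j) (rev cs ! ?nx j) (rev cs ! ?pv j))
      \<longleftrightarrow> (\<exists>i<?n. P (cs ! i) (cs ! ?pv i) (cs ! ?nx i))" for P
  proof
    assume "\<exists>j<?n. P (rev cs ! j) (rev cs ! ?nx j) (rev cs ! ?pv j)"
    then obtain j where j: "j < ?n" "P (rev cs ! j) (rev cs ! ?nx j) (rev cs ! ?pv j)" by blast
    then have "?n - 1 - (?n - 1 - j) = j" by simp
    then show "\<exists>i<?n. P (cs ! i) (cs ! ?pv i) (cs ! ?nx i)"
      using j rev_nth_cyclic[of "?n - 1 - j" cs] by (intro exI[of _ "?n - 1 - j"]) auto
  next
    assume "\<exists>i<?n. P (cs ! i) (cs ! ?pv i) (cs ! ?nx i)"
    then obtain i where i: "i < ?n" "P (cs ! i) (cs ! ?pv i) (cs ! ?nx i)" by blast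
    then show "\<exists>j<?n. P (rev cs ! j) (rev cs ! ?nx j) (rev cs ! ?pv j)"
      using rev_nth_cyclic[OF i(1)] by (intro exI[of _ "?n - 1 - i"]) auto
  qed
  note key = this
  show ?thesis
    unfolding cycle_side_def Let_def set_rev length_rev
    apply (intro Collect_cong conj_cong refl)
    subgoal for x
      using key[of "\<lambda>c nx pv. \<exists>y xs. ((c, y) \<in> AG \<and> rot_between R (c, nx) (c, pv) (c, y)) \<and>
        walk_in (VG - set cs) AG xs \<and> hd xs = y \<and> last xs = x"] by simp
    done
qed

lemma cycle_side_subset: "cycle_side VG AG rotG cs b \<subseteq> VG"
  unfolding cycle_side_def by auto

lemma one_le_card_cycle_side:
  assumes "finite VG" "y \<in> cycle_side VG AG rotG cs b"
  shows "1 \<le> card (cycle_side VG AG rotG cs b)"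
proof -
  have "finite (cycle_side VG AG rotG cs b)" using finite_subset[OF cycle_side_subset assms(1)] .
  then have "0 < card (cycle_side VG AG rotG cs b)" using assms(2) card_gt_0_iff by blast
  then show ?thesis by simp
qed

lemma cycle_side_memI:
  assumes i: "i < length cs" and c: "c = cs ! i" and nx: "nx = cs ! ((i + 1) mod length cs)"
    and pv: "pv = cs ! ((i + length cs - 1) mod length cs)" and "nx \<noteq> pv"
    and y: "y \<in> VG" "y \<notin> set cs" "(c, y) \<in> AG"
  shows "rotG (c, nx) = (c, y) \<Longrightarrow> y \<noteq> pv \<Longrightarrow> y \<in> cycle_side VG AG rotG cs True"
    and "rotG (c, pv) = (c, y) \<Longrightarrow> y \<noteq> nx \<Longrightarrow> y \<in> cycle_side VG AG rotG cs False"
proof -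
  have walk: "walk_in (VG - set cs) AG [y]" using y by (simp add: walk_in_def)
  have first: "rot_between rotG (c, u) (c, u') (c, y)"
    if "rotG (c, u) = (c, y)" "y \<noteq> u'" "u \<noteq> u'" for u u'
    unfolding rot_between_def using that le_Suc_eq
    by (intro exI[of _ 1]) (auto simp: le_Suc_eq)
  show "y \<in> cycle_side VG AG rotG cs True" if "rotG (c, nx) = (c, y)" "y \<noteq> pv"
    unfolding cycle_side_def Let_def using i c nx pv y walk first[OF that \<open>nx \<noteq> pv\<close>]
    by (intro CollectI conjI exI[of _ i] bexI) (auto intro!: exI[of _ y] exI[of _ "[y]"])
  show "y \<in> cycle_side VG AG rotG cs False" if "rotG (c, pv) = (c, y)" "y \<noteq> nx"
    unfolding cycle_side_def Let_def using i c nx pv y walk first[OF that] \<open>nx \<noteq> pv\<close>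
    by (intro CollectI conjI exI[of _ i] bexI) (auto intro!: exI[of _ y] exI[of _ "[y]"])
qed

section \<open>Plane maps\<close>

lemma phi_eq_rot_swap: "phi rot = rot \<circ> prod.swap"
  by (rule ext) (simp add: phi_def prod.swap_def)

lemma face_orbit_eq_orbit_of: "face_orbit rot d = orbit_of (phi rot) d"
  unfolding face_orbit_def orbit_of_def ..

locale plane_map =
  fixes V :: "'v set" and A :: "('v \<times> 'v) set" and rot :: "'v \<times> 'v \<Rightarrow> 'v \<times> 'v"
  assumes plane_graph: "plane_graph V A rot"
begin

lemma simple: "simple_graph V A"
  using plane_graph unfolding plane_graph_def by simp

lemma finite_V: "finite V"
  using simple unfolding simple_graph_def by simp

lemma arc_ends: "(u, w) \<in> A \<Longrightarrow> u \<in> V \<and> w \<in> V"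
  using simple unfolding simple_graph_def by auto

lemma finite_A: "finite A"
  using simple finite_V unfolding simple_graph_def by (metis finite_SigmaI finite_subset)

lemma arc_sym: "(u, w) \<in> A \<Longrightarrow> (w, u) \<in> A"
  using simple unfolding simple_graph_def by simp

lemma arc_irrefl: "(u, u) \<notin> A"
  using simple unfolding simple_graph_def by simp

lemma connected: "connected_on V A"
  using plane_graph unfolding plane_graph_def by simp

lemma rotation_system: "rotation_system A rot"
  using plane_graph unfolding plane_graph_def by simp

lemma rot_bij: "bij_betw rot A A"
  using rotation_system unfolding rotation_system_def by simp

lemma rot_fst: "d \<in> A \<Longrightarrow> fst (rot d) = fst d"
  using rotation_system unfolding rotation_system_def by simp

lemma rot_in: "d \<in> A \<Longrightarrow> rot d \<in> A"
  using rot_bij bij_betwE by blast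

lemma rot_reach: "d \<in> A \<Longrightarrow> d' \<in> A \<Longrightarrow> fst d = fst d' \<Longrightarrow> \<exists>n. (rot ^^ n) d = d'"
  using rotation_system unfolding rotation_system_def by blast

lemma rot_funpow: "d \<in> A \<Longrightarrow> (rot ^^ n) d \<in> A \<and> fst ((rot ^^ n) d) = fst d"
  by (induct n) (auto simp: rot_in rot_fst)

lemma rot_pair:
  assumes "(u, w) \<in> A" obtains y where "rot (u, w) = (u, y)" "(u, y) \<in> A"
  using rot_fst[OF assms] rot_in[OF assms] by (metis prod.collapse fst_conv)

lemma swap_in: "d \<in> A \<Longrightarrow> prod.swap d \<in> A"
  using arc_sym by (cases d) simp

lemma bij_betw_swap: "bij_betw prod.swap A A"
  by (rule bij_betw_byWitness[where f' = prod.swap]) (auto intro: arc_sym)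

lemma phi_bij: "bij_betw (phi rot) A A"
  unfolding phi_eq_rot_swap using bij_betw_swap rot_bij by (rule bij_betw_trans)

lemma face_subset: "F \<in> faces A rot \<Longrightarrow> F \<subseteq> A"
  unfolding faces_def face_orbit_eq_orbit_of using orbit_of_subset[OF phi_bij] by auto

lemma phi_in_face: "F \<in> faces A rot \<Longrightarrow> e \<in> F \<Longrightarrow> phi rot e \<in> F"
  unfolding faces_def face_orbit_eq_orbit_of using orbit_of_eq[OF finite_A phi_bij]
  by (metis imageE orbit_of_step)

lemma finite_neighbours: "finite {w. (v, w) \<in> A}"
  using arc_ends finite_V by (metis (mono_tags) finite_subset mem_Collect_eq subsetI)

lemma rot_closed_contains:
  assumes "d0 \<in> A" "d0 \<in> S" and "\<forall>z\<in>S. rot z \<in> S" and "d \<in> A" "fst d = fst d0"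
  shows "d \<in> S"
proof -
  obtain n where "(rot ^^ n) d0 = d" using rot_reach assms by metis
  moreover have "(rot ^^ n) d0 \<in> S" for n by (induct n) (use assms in auto)
  ultimately show ?thesis by auto
qed

lemma rot_no_fixpoint:
  assumes "d \<in> A" "d' \<in> A" "fst d = fst d'" "d \<noteq> d'"
  shows "rot d \<noteq> d"
  using rot_closed_contains[of d "{d}" d'] assms by auto

lemma orbit_of_rot:
  assumes "d \<in> A" shows "orbit_of rot d = {d' \<in> A. fst d' = fst d}"
proof
  show "orbit_of rot d \<subseteq> {d' \<in> A. fst d' = fst d}"
    using rot_funpow[OF assms] unfolding orbit_of_def by auto
  show "{d' \<in> A. fst d' = fst d} \<subseteq> orbit_of rot d"
    using rot_reach[OF assms] orbit_of_funpow by (metis (mono_tags, lifting) mem_Collect_eq subsetI)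
qed

lemma no_isolated_vertex:
  assumes "v \<in> V" "w \<in> V" "v \<noteq> w" "x \<in> V"
  obtains y where "(x, y) \<in> A"
proof -
  obtain y where y: "y \<in> V" "y \<noteq> x" using assms by auto
  then obtain xs where xs: "walk_in V A xs" "hd xs = x" "last xs = y"
    using connected assms(4) unfolding connected_on_def by blast
  then obtain zs where zs: "xs = x # zs" unfolding walk_in_def by (cases xs) auto
  then have "zs \<noteq> []" using xs(3) y(2) by auto
  then obtain z zs' where "xs = x # z # zs'" using zs by (cases zs) auto
  then have "(x, z) \<in> A" using walk_in_Cons2 xs(1) by simp
  then show ?thesis by (rule that)
qed

lemma cycle_count_rot:
  assumes "\<forall>v\<in>V. \<exists>w. (v, w) \<in> A"
  shows "cycle_count rot A = card V"
proof -
  let ?at = "\<lambda>v. {d' \<in> A. fst d' = v}"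
  have "orbit_of rot ` A = ?at ` V"
    using orbit_of_rot arc_ends assms by (fastforce simp: image_iff)
  moreover have "inj_on ?at V"
    by (rule inj_onI) (use assms in \<open>metis (mono_tags, lifting) fst_conv mem_Collect_eq\<close>)
  ultimately show ?thesis unfolding cycle_count_def by (simp add: card_image)
qed

lemma cycle_count_phi: "cycle_count (phi rot) A = card (faces A rot)"
  unfolding cycle_count_def faces_def face_orbit_eq_orbit_of ..

lemma rtrancl_darts_along_walk:
  assumes swap: "\<forall>d\<in>A. (d, prod.swap d) \<in> R\<^sup>*"
    and same: "\<forall>d\<in>A. \<forall>d'\<in>A. fst d = fst d' \<and> fst d \<in> S \<longrightarrow> (d, d') \<in> R\<^sup>*"
  shows "walk_in S A xs \<Longrightarrow> d1 \<in> A \<Longrightarrow> fst d1 = hd xs \<Longrightarrow> d2 \<in> A \<Longrightarrow> fst d2 = last xs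
     \<Longrightarrow> (d1, d2) \<in> R\<^sup>*"
proof (induct xs arbitrary: d1)
  case Nil then show ?case by (simp add: walk_in_def)
next
  case (Cons x xs)
  have "x \<in> S" using Cons.prems(1) unfolding walk_in_def by simp
  show ?case
  proof (cases xs)
    case Nil
    then show ?thesis using same Cons.prems(2-5) \<open>x \<in> S\<close> by simp
  next
    case (Cons y ys)
    then have xy: "(x, y) \<in> A" using walk_in_Cons2 Cons.prems(1) by simp
    have walk: "walk_in S A xs" using walk_in_tl[OF Cons.prems(1)] Cons by simp
    have "(d1, (x, y)) \<in> R\<^sup>*" using same Cons.prems(2,3) xy \<open>x \<in> S\<close> by simp
    moreover have "((x, y), (y, x)) \<in> R\<^sup>*" using bspec[OF swap xy] by simp
    moreover have "((y, x), d2) \<in> R\<^sup>*"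
      using Cons.hyps[OF walk arc_sym[OF xy]] Cons.prems(4,5) Cons by simp
    ultimately show ?thesis by (meson rtrancl_trans)
  qed
qed

text \<open>Cutting the rotation at v between the darts towards a and towards b gives a map with
  one more vertex and one more face than the original; a walk from a to b avoiding v keeps
  it connected, which the genus inequality forbids.\<close>

context
  fixes v a b
  assumes av: "(a, v) \<in> A" and bv: "(b, v) \<in> A" and ab: "a \<noteq> b"
begin

definition split_rot :: "'v \<times> 'v \<Rightarrow> 'v \<times> 'v" where
  "split_rot = rot \<circ> transpose (v, a) (v, b)"

lemma split_rot_bij: "bij_betw split_rot A A"
  unfolding split_rot_def using av bv arc_sym
  by (intro bij_betw_trans[OF _ rot_bij]) simp

lemma cycle_count_split_rot: "cycle_count split_rot A = cycle_count rot A + 1"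
  unfolding split_rot_def using av bv ab arc_sym orbit_of_rot
  by (intro cycle_count_transpose_split[OF finite_A rot_bij]) auto

lemma cycle_count_split_faces:
  assumes "(a, v) \<in> F" "(b, v) \<in> F" "F \<in> faces A rot"
  shows "cycle_count (split_rot \<circ> restrict_id prod.swap A) A = cycle_count (phi rot) A + 1"
proof -
  have phi_bij': "bij_betw (phi rot \<circ> transpose (a, v) (b, v)) A A"
    using av bv by (intro bij_betw_trans[OF _ phi_bij]) simp
  have "\<forall>x\<in>A. (split_rot \<circ> restrict_id prod.swap A) x = (phi rot \<circ> transpose (a, v) (b, v)) x"
    by (auto simp: split_rot_def restrict_id_def phi_def transpose_def)
  then have "cycle_count (split_rot \<circ> restrict_id prod.swap A) A
      = cycle_count (phi rot \<circ> transpose (a, v) (b, v)) A"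
    by (rule cycle_count_cong[OF phi_bij'])
  also have "\<dots> = cycle_count (phi rot) A + 1"
  proof (rule cycle_count_transpose_split[OF finite_A phi_bij av bv])
    obtain d where "d \<in> A" "F = orbit_of (phi rot) d"
      using assms(3) unfolding faces_def face_orbit_eq_orbit_of by auto
    then show "(b, v) \<in> orbit_of (phi rot) (a, v)"
      using assms(1,2) orbit_of_eq[OF finite_A phi_bij] by metis
  qed (use ab in simp)
  finally show ?thesis .
qed

definition split_links :: "(('v \<times> 'v) \<times> ('v \<times> 'v)) set" where
  "split_links = dart_links split_rot A prod.swap A"

lemma split_links_sym: "(x, y) \<in> split_links\<^sup>* \<Longrightarrow> (y, x) \<in> split_links\<^sup>*"
proof -
  have "sym split_links" unfolding split_links_def using swap_in by (intro sym_dart_links) simp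
  then show "(x, y) \<in> split_links\<^sup>* \<Longrightarrow> (y, x) \<in> split_links\<^sup>*" by (rule symD[OF sym_rtrancl])
qed

lemma split_links_rot: "\<forall>x\<in>A. (x, split_rot x) \<in> split_links\<^sup>* \<and> split_rot x \<in> A"
  unfolding split_links_def dart_links_def using bij_betwE[OF split_rot_bij] by auto

lemma split_links_swap: "\<forall>d\<in>A. (d, prod.swap d) \<in> split_links\<^sup>*"
  unfolding split_links_def dart_links_def by auto

lemma split_links_same_tail:
  "\<forall>d\<in>A. \<forall>d'\<in>A. fst d = fst d' \<and> fst d \<in> V - {v} \<longrightarrow> (d, d') \<in> split_links\<^sup>*"
proof (intro ballI impI)
  fix d d' assume d: "d \<in> A" "d' \<in> A" "fst d = fst d' \<and> fst d \<in> V - {v}"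
  obtain n where n: "(rot ^^ n) d = d'" using rot_reach d by blast
  let ?S = "{x \<in> A. fst x = fst d}"
  have "\<forall>y\<in>?S. rot y \<in> ?S" using rot_in rot_fst by auto
  moreover have "\<forall>y\<in>?S. split_rot y = rot y" using d by (auto simp: split_rot_def)
  ultimately have "(split_rot ^^ n) d = d'"
    using funpow_agree_on_closed[of ?S rot split_rot d n] d n by auto
  then show "(d, d') \<in> split_links\<^sup>*"
    using orbit_of_funpow orbit_of_rtrancl[OF split_links_rot d(1)] by metis
qed

text \<open>The two halves of the split rotation at v are linked through the avoiding walk.\<close>

lemma split_links_at_v:
  assumes walk: "walk_in (V - {v}) A xs" "hd xs = a" "last xs = b"
    and d: "d \<in> A" "fst d = v"
  shows "(d, (v, a)) \<in> split_links\<^sup>*"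
proof -
  have "((a, v), (b, v)) \<in> split_links\<^sup>*"
    using rtrancl_darts_along_walk[OF split_links_swap split_links_same_tail walk(1)]
      walk(2,3) av bv
    by simp
  moreover have "((v, a), (a, v)) \<in> split_links\<^sup>*" "((b, v), (v, b)) \<in> split_links\<^sup>*"
    using bspec[OF split_links_swap arc_sym[OF av]] bspec[OF split_links_swap bv] by simp_all
  ultimately have ab_linked: "((v, a), (v, b)) \<in> split_links\<^sup>*" by (meson rtrancl_trans)
  have "orbit_of rot (v, a) = orbit_of split_rot (v, a) \<union> orbit_of split_rot (v, b)"
    using orbit_of_transpose_merge[OF finite_A split_rot_bij, of "(v, a)" "(v, b)"]
      transpose_splits_orbit[OF finite_A rot_bij, of "(v, a)" "(v, b)"]
      av bv ab arc_sym orbit_of_rot by (simp add: split_rot_def comp_assoc)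
  then have "d \<in> orbit_of split_rot (v, a) \<or> d \<in> orbit_of split_rot (v, b)"
    using d orbit_of_rot[of "(v, a)"] av arc_sym by auto
  then show ?thesis
    using orbit_of_rtrancl[OF split_links_rot] av bv arc_sym ab_linked
    by (meson rtrancl_trans split_links_sym)
qed

lemma split_rot_connected:
  assumes walk: "walk_in (V - {v}) A xs" "hd xs = a" "last xs = b"
  shows "\<forall>x\<in>A. (x, (v, a)) \<in> split_links\<^sup>*"
proof
  have to_v: "(d, (v, a)) \<in> split_links\<^sup>*"
    if "walk_in V A ys" "last ys = v" "d \<in> A" "fst d = hd ys" for ys d
    using that
  proof (induct ys arbitrary: d)
    case Nil then show ?case by (simp add: walk_in_def)
  next
    case (Cons y ys)
    show ?case
    proof (cases "y = v")
      case True then show ?thesis using split_links_at_v[OF walk] Cons.prems by auto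
    next
      case False
      then obtain z zs where z: "ys = z # zs" using Cons.prems by (cases ys) auto
      have yz: "(y, z) \<in> A" using Cons.prems(1) unfolding z by (rule walk_in_Cons2)
      have "y \<in> V" using Cons.prems(1) unfolding walk_in_def by simp
      then have "(d, (y, z)) \<in> split_links\<^sup>*"
        using split_links_same_tail Cons.prems yz False by auto
      moreover have "((y, z), (z, y)) \<in> split_links\<^sup>*" using bspec[OF split_links_swap yz] by simp
      moreover have "((z, y), (v, a)) \<in> split_links\<^sup>*"
        using Cons.hyps[OF walk_in_tl[OF Cons.prems(1)]] Cons.prems z arc_sym[OF yz] by simp
      ultimately show ?thesis by (meson rtrancl_trans)
    qed
  qed
  fix x assume "x \<in> A"
  then obtain ys where ys: "walk_in V A ys" "hd ys = fst x" "last ys = v"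
    using connected arc_ends av unfolding connected_on_def by (metis prod.collapse)
  show "(x, (v, a)) \<in> split_links\<^sup>*" using to_v[OF ys(1,3) \<open>x \<in> A\<close> ys(2)[symmetric]] .
qed

end

theorem face_twice_no_avoiding_walk:
  assumes F: "F \<in> faces A rot" and av: "(a, v) \<in> F" and bv: "(b, v) \<in> F" and ab: "a \<noteq> b"
  shows "\<not> (\<exists>xs. walk_in (V - {v}) A xs \<and> hd xs = a \<and> last xs = b)"
proof
  assume "\<exists>xs. walk_in (V - {v}) A xs \<and> hd xs = a \<and> last xs = b"
  then obtain xs where xs: "walk_in (V - {v}) A xs" "hd xs = a" "last xs = b" by blast
  have avA: "(a, v) \<in> A" and bvA: "(b, v) \<in> A" using av bv face_subset[OF F] by auto
  have swap_props: "\<forall>x\<in>A. prod.swap x \<in> A \<and> prod.swap x \<noteq> x \<and> prod.swap (prod.swap x) = x"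
    using swap_in arc_irrefl by (auto simp: prod.swap_def)
  have "\<forall>x\<in>A. (x, (v, a)) \<in> (dart_links (split_rot v a b) A prod.swap A)\<^sup>*"
    using split_rot_connected[OF avA bvA ab xs, unfolded split_links_def[OF avA bvA ab]] .
  then have "2 * (cycle_count (split_rot v a b \<circ> restrict_id prod.swap A) A
      + cycle_count (split_rot v a b) A) \<le> 4 + card A"
    by (rule genus_inequality_connected[OF finite_A split_rot_bij[OF avA bvA ab] swap_props
          arc_sym[OF avA]])
  moreover have "\<forall>x\<in>V. \<exists>y. (x, y) \<in> A"
    using no_isolated_vertex[of a v] arc_ends[OF avA] arc_irrefl avA by metis
  moreover have "int (card V) - int (card A div 2) + int (card (faces A rot)) = 2"
    using plane_graph avA unfolding plane_graph_def by auto
  ultimately show False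
    using cycle_count_split_rot[OF avA bvA ab] cycle_count_split_faces[OF avA bvA ab av bv F]
      cycle_count_rot cycle_count_phi by simp
qed

corollary face_twice_cut_vertex:
  assumes "F \<in> faces A rot" "(a, v) \<in> F" "(b, v) \<in> F" "a \<noteq> b"
  shows "cut_vertex V A v"
proof -
  have "(a, v) \<in> A" "(b, v) \<in> A" using face_subset assms by auto
  then have "a \<in> V - {v}" "b \<in> V - {v}" "v \<in> V" using arc_ends arc_irrefl by auto
  then show ?thesis
    unfolding cut_vertex_def connected_on_def using face_twice_no_avoiding_walk[OF assms] by blast
qed

lemma triangular_face:
  assumes d: "(x, c) \<in> A" and card3: "card (face_orbit rot (x, c)) = 3"
  shows "\<exists>a. rot (c, x) = (c, a) \<and> rot (a, c) = (a, x) \<and> rot (x, a) = (x, c) \<and>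
     face_orbit rot (x, c) = {(x, c), (c, a), (a, x)} \<and> (c, a) \<in> A \<and> (a, x) \<in> A"
proof -
  define L where "L = (LEAST L. 0 < L \<and> (phi rot ^^ L) (x, c) = (x, c))"
  note period = orbit_of_enumerate[OF finite_A phi_bij d, folded L_def]
  have L3: "L = 3" using period(2) card3 by (simp add: face_orbit_eq_orbit_of)
  obtain a where a: "rot (c, x) = (c, a)" "(c, a) \<in> A" using rot_pair[OF arc_sym[OF d]] .
  obtain b where b: "rot (a, c) = (a, b)" "(a, b) \<in> A" using rot_pair[OF arc_sym[OF a(2)]] .
  have phi1: "phi rot (x, c) = (c, a)" and phi2: "phi rot (c, a) = (a, b)"
    using a b by (simp_all add: phi_def)
  have "rot (b, a) = (x, c)"
    using period(4) phi1 phi2 L3 by (simp add: numeral_3_eq_3 phi_def)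
  moreover have "fst (rot (b, a)) = b" using rot_fst[OF arc_sym[OF b(2)]] by simp
  ultimately have "b = x" by simp
  moreover have "{..<3::nat} = {0, 1, 2}" by auto
  ultimately show ?thesis
    using a b phi1 phi2 \<open>rot (b, a) = (x, c)\<close> period(1) L3
    by (auto simp: face_orbit_eq_orbit_of numeral_2_eq_2)
qed

lemma nonseparable_arc:
  assumes "(v, a) \<in> A"
  shows "nonseparable {v, a} A"
  unfolding nonseparable_def connected_on_def
proof (intro conjI ballI)
  fix x y assume "x \<in> {v, a}" "y \<in> {v, a}"
  then consider "x = y" | "x = v" "y = a" | "x = a" "y = v" by auto
  then show "\<exists>xs. walk_in {v, a} A xs \<and> hd xs = x \<and> last xs = y"
  proof cases
    case 1
    then show ?thesis using \<open>x \<in> {v, a}\<close> by (intro exI[of _ "[x]"]) (auto simp: walk_in_def)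
  next
    case 2
    then show ?thesis using assms by (intro exI[of _ "[v, a]"]) (auto simp: walk_in_def less_Suc_eq)
  next
    case 3
    then show ?thesis using arc_sym[OF assms]
      by (intro exI[of _ "[a, v]"]) (auto simp: walk_in_def less_Suc_eq)
  qed
next
  fix z x y assume "z \<in> {v, a}" "x \<in> {v, a} - {z}" "y \<in> {v, a} - {z}"
  then show "\<exists>xs. walk_in ({v, a} - {z}) A xs \<and> hd xs = x \<and> last xs = y"
    by (intro exI[of _ "[x]"]) (auto simp: walk_in_def)
qed

lemma block_containing_arc:
  assumes "(v, a) \<in> A"
  obtains B where "is_block V A B" "v \<in> B" "a \<in> B"
proof -
  let ?F = "{B. {v, a} \<subseteq> B \<and> B \<subseteq> V \<and> nonseparable B A}"
  have va: "v \<in> V" "a \<in> V" "v \<noteq> a" using arc_ends[OF assms] arc_irrefl assms by auto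
  have "nonseparable {v, a} A" by (rule nonseparable_arc[OF assms])
  then have pair: "{v, a} \<in> ?F" using va by auto
  have "card B < Suc (card V)" if "B \<in> ?F" for B
    using that card_mono[OF finite_V, of B] by simp
  then have "\<forall>B. B \<in> ?F \<longrightarrow> card B < Suc (card V)" by blast
  from ex_has_greatest_nat[of "\<lambda>B. B \<in> ?F", OF pair this]
  obtain B where B: "B \<in> ?F" "\<forall>B'. B' \<in> ?F \<longrightarrow> card B' \<le> card B" by blast
  have "is_block V A B"
    unfolding is_block_def
  proof (intro conjI allI impI)
    show "B \<subseteq> V" "nonseparable B A" using B(1) by auto
    have "card {v, a} \<le> card B" using B(2) pair by blast
    then show "2 \<le> card B" using va by simp
    fix B' assume B': "B \<subset> B' \<and> B' \<subseteq> V"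
    show "\<not> nonseparable B' A"
    proof
      assume "nonseparable B' A"
      then have "B' \<in> ?F" using B(1) B' by auto
      then have "card B' \<le> card B" using B(2) by blast
      moreover have "card B < card B'"
        using B' finite_V by (meson psubset_card_mono rev_finite_subset)
      ultimately show False by simp
    qed
  qed
  then show ?thesis using that B(1) by auto
qed

lemma three_blocks_at:
  assumes arcs: "(v, a) \<in> A" "(v, b) \<in> A" "(v, c) \<in> A"
    and sep: "\<not> (\<exists>xs. walk_in (V - {v}) A xs \<and> hd xs = a \<and> last xs = b)"
      "\<not> (\<exists>xs. walk_in (V - {v}) A xs \<and> hd xs = a \<and> last xs = c)"
      "\<not> (\<exists>xs. walk_in (V - {v}) A xs \<and> hd xs = b \<and> last xs = c)"
  shows "3 \<le> card {B. is_block V A B \<and> v \<in> B}"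
proof -
  obtain Ba where Ba: "is_block V A Ba" "v \<in> Ba" "a \<in> Ba" using block_containing_arc[OF arcs(1)] .
  obtain Bb where Bb: "is_block V A Bb" "v \<in> Bb" "b \<in> Bb" using block_containing_arc[OF arcs(2)] .
  obtain Bc where Bc: "is_block V A Bc" "v \<in> Bc" "c \<in> Bc" using block_containing_arc[OF arcs(3)] .
  have not_v: "a \<noteq> v" "b \<noteq> v" "c \<noteq> v" using arcs arc_irrefl by auto
  text \<open>A block stays connected after deleting v, so it cannot contain two separated neighbours.\<close>
  have distinct_blocks: "B1 \<noteq> B2"
    if "is_block V A B1" "v \<in> B1" "x \<in> B1" "y \<in> B2" "x \<noteq> v" "y \<noteq> v"
       "\<not> (\<exists>xs. walk_in (V - {v}) A xs \<and> hd xs = x \<and> last xs = y)" for B1 B2 x y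
  proof
    assume "B1 = B2"
    have "connected_on (B1 - {v}) A"
      using that(1,2) unfolding is_block_def nonseparable_def by blast
    moreover have "x \<in> B1 - {v}" "y \<in> B1 - {v}" using that \<open>B1 = B2\<close> by auto
    ultimately obtain xs where "walk_in (B1 - {v}) A xs" "hd xs = x" "last xs = y"
      unfolding connected_on_def by blast
    moreover have "B1 - {v} \<subseteq> V - {v}" using that(1) unfolding is_block_def by auto
    ultimately have "walk_in (V - {v}) A xs" unfolding walk_in_def by auto
    then show False using that \<open>hd xs = x\<close> \<open>last xs = y\<close> by blast
  qed
  have "Ba \<noteq> Bb" "Ba \<noteq> Bc" "Bb \<noteq> Bc"
    using distinct_blocks[OF Ba(1-3) Bb(3) not_v(1,2) sep(1)]
      distinct_blocks[OF Ba(1-3) Bc(3) not_v(1,3) sep(2)]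
      distinct_blocks[OF Bb(1-3) Bc(3) not_v(2,3) sep(3)] by auto
  then have "card {Ba, Bb, Bc} = 3" by simp
  moreover have "{Ba, Bb, Bc} \<subseteq> {B. is_block V A B \<and> v \<in> B}" using Ba Bb Bc by auto
  moreover have "finite {B. is_block V A B \<and> v \<in> B}"
    using finite_V by (rule rev_finite_subset[OF finite_Collect_subsets]) (auto simp: is_block_def)
  ultimately show ?thesis by (metis card_mono)
qed

end

locale triangulation_map = plane_map +
  assumes face_card: "F \<in> faces A rot \<Longrightarrow> card F = 3"
begin

lemma triangle_at:
  assumes "(x, c) \<in> A"
  obtains a where "rot (c, x) = (c, a)" "rot (a, c) = (a, x)" "rot (x, a) = (x, c)"
    "(c, a) \<in> A" "(a, x) \<in> A"
proof -
  have "face_orbit rot (x, c) \<in> faces A rot" using assms unfolding faces_def by auto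
  then show ?thesis using triangular_face[OF assms] face_card that by blast
qed

lemma rot_successor_triangle:
  assumes "(c, nx) \<in> A" "rot (c, nx) = (c, x)"
  shows "rot (x, c) = (x, nx) \<and> rot (nx, x) = (nx, c) \<and> (x, c) \<in> A \<and> (nx, x) \<in> A"
  using triangle_at[OF arc_sym[OF assms(1)]] assms(2) arc_sym by (metis prod.inject)

lemma rot_successor_new:
  assumes cnx: "(c, nx) \<in> A" and cpv: "(c, pv) \<in> A" and nonadj: "(pv, nx) \<notin> A" and "nx \<noteq> pv"
    and r: "rot (c, nx) = (c, y)"
  shows "y \<noteq> pv \<and> y \<noteq> nx \<and> y \<noteq> c \<and> (c, y) \<in> A \<and> y \<in> V"
proof -
  have cy: "(c, y) \<in> A" using rot_in[OF cnx] r by simp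
  have "y \<noteq> nx" using rot_no_fixpoint[OF cnx cpv] \<open>nx \<noteq> pv\<close> r by auto
  moreover have "y \<noteq> pv" using rot_successor_triangle[OF cnx r] nonadj arc_sym by blast
  ultimately show ?thesis using cy arc_irrefl arc_ends by fastforce
qed

lemma rot_successor_on_cycle_side:
  assumes i: "i < length cs" and c: "c = cs ! i" and nx: "nx = cs ! ((i + 1) mod length cs)"
    and pv: "pv = cs ! ((i + length cs - 1) mod length cs)" and "nx \<noteq> pv"
    and arcs: "(c, nx) \<in> A" "(c, pv) \<in> A" and nonadj: "(pv, nx) \<notin> A"
    and no_chord: "\<forall>z\<in>set cs. (c, z) \<in> A \<longrightarrow> z = nx \<or> z = pv"
  shows "rot (c, nx) = (c, y) \<Longrightarrow> y \<in> cycle_side V A rot cs True"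
    and "rot (c, pv) = (c, y) \<Longrightarrow> y \<in> cycle_side V A rot cs False"
proof -
  note memI = cycle_side_memI[OF i c nx pv \<open>nx \<noteq> pv\<close>]
  have nonadj': "(nx, pv) \<notin> A" using nonadj arc_sym by blast
  show "y \<in> cycle_side V A rot cs True" if r: "rot (c, nx) = (c, y)"
    using rot_successor_new[OF arcs nonadj \<open>nx \<noteq> pv\<close> r] no_chord
    by (intro memI(1)[where rotG = rot, OF _ _ _ r]) auto
  show "y \<in> cycle_side V A rot cs False" if r: "rot (c, pv) = (c, y)"
    using rot_successor_new[OF arcs(2,1) nonadj' \<open>nx \<noteq> pv\<close>[symmetric] r] no_chord
    by (intro memI(2)[where rotG = rot, OF _ _ _ r]) auto
qed

end

lemma triangulation_map_of_triangulation:
  "triangulation V A rot \<Longrightarrow> triangulation_map V A rot"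
  unfolding triangulation_def triangulation_map_def triangulation_map_axioms_def plane_map_def
  by simp

section \<open>A configuration contained in a triangulation\<close>

locale configuration_in_triangulation =
  fixes V :: "'v set" and A :: "('v \<times> 'v) set" and rot :: "'v \<times> 'v \<Rightarrow> 'v \<times> 'v"
    and Out :: "('v \<times> 'v) set" and \<delta> :: "'v \<Rightarrow> nat"
    and VG :: "'w set" and AG :: "('w \<times> 'w) set" and rotG :: "'w \<times> 'w \<Rightarrow> 'w \<times> 'w"
    and f :: "'v \<Rightarrow> 'w"
  assumes conf: "configuration V A rot Out \<delta>"
    and tri: "triangulation VG AG rotG"
    and cont: "contains_via V A rot Out \<delta> VG AG rotG f"
begin

sublocale Z: plane_map V A rot
  using conf unfolding configuration_def near_triangulation_def plane_map_def by simp

sublocale G: triangulation_map VG AG rotG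
  using tri by (rule triangulation_map_of_triangulation)

lemma inner_face_card: "F \<in> faces A rot \<Longrightarrow> F \<noteq> Out \<Longrightarrow> card F = 3"
  using conf unfolding configuration_def near_triangulation_def by simp

lemma Out_face: "A \<noteq> {} \<Longrightarrow> Out \<in> faces A rot"
  using conf unfolding configuration_def near_triangulation_def by auto

lemma outer_vertex_deg: "v \<in> V \<Longrightarrow> v \<in> outer_vertices V A Out \<Longrightarrow> deg A v < \<delta> v"
  using conf unfolding configuration_def by simp

lemma cut_vertex_blocks:
  "v \<in> V \<Longrightarrow> cut_vertex V A v \<Longrightarrow> card {B. is_block V A B \<and> v \<in> B} = 2 \<and> \<delta> v = deg A v + 2"
  using conf unfolding configuration_def by simp

lemma f_eq_iff: "u \<in> V \<Longrightarrow> w \<in> V \<Longrightarrow> f u = f w \<longleftrightarrow> u = w"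
  using cont unfolding contains_via_def inj_on_def by blast

lemma f_in: "v \<in> V \<Longrightarrow> f v \<in> VG"
  using cont unfolding contains_via_def by auto

lemma f_arc: "(u, w) \<in> A \<Longrightarrow> (f u, f w) \<in> AG"
  using cont unfolding contains_via_def by auto

lemma f_inner_face: "F \<in> faces A rot \<Longrightarrow> F \<noteq> Out \<Longrightarrow> map_prod f f ` F \<in> faces AG rotG"
  using cont unfolding contains_via_def by auto

lemma f_deg: "v \<in> V \<Longrightarrow> deg AG (f v) = \<delta> v"
  using cont unfolding contains_via_def by auto

lemma cut_vertex_new_arcs_not_consecutive:
  "cut_vertex V A v \<Longrightarrow> v \<in> V \<Longrightarrow> (f v, a) \<in> AG - map_prod f f ` A \<Longrightarrow>
    (f v, b) \<in> AG - map_prod f f ` A \<Longrightarrow> a \<noteq> b \<Longrightarrow> rotG (f v, a) \<noteq> (f v, b)"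
  using cont unfolding contains_via_def by blast

lemma distinct_map_f: "distinct ps \<Longrightarrow> set ps \<subseteq> V \<Longrightarrow> distinct (map f ps)"
  using cont unfolding contains_via_def by (metis distinct_map inj_on_subset)

definition chord :: "'v \<Rightarrow> 'v \<Rightarrow> bool" where
  "chord a b \<longleftrightarrow> a \<in> V \<and> b \<in> V \<and> (f a, f b) \<in> AG \<and> (a, b) \<notin> A"

definition image_darts :: "'v \<Rightarrow> ('w \<times> 'w) set" where
  "image_darts v = {(f v, f t) | t. (v, t) \<in> A}"

definition new_neighbours :: "'v \<Rightarrow> 'w set" where
  "new_neighbours v = {y. (f v, y) \<in> AG} - f ` {t. (v, t) \<in> A}"

lemma chord_sym: "chord a b \<Longrightarrow> chord b a"
  unfolding chord_def using Z.arc_sym G.arc_sym by blast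

lemma rot_image_inner_face:
  assumes xc: "(x, c) \<in> A" and inner: "face_orbit rot (x, c) \<noteq> Out"
  obtains a where "rot (c, x) = (c, a)" "(a, x) \<in> A" "(c, a) \<in> A"
    "rotG (f c, f x) = (f c, f a)"
proof -
  have F: "face_orbit rot (x, c) \<in> faces A rot" using xc unfolding faces_def by auto
  then have "card (face_orbit rot (x, c)) = 3" using inner_face_card inner by simp
  from Z.triangular_face[OF xc this] obtain a where a: "rot (c, x) = (c, a)"
    "face_orbit rot (x, c) = {(x, c), (c, a), (a, x)}" "(c, a) \<in> A" "(a, x) \<in> A" by blast
  have F': "{(f x, f c), (f c, f a), (f a, f x)} \<in> faces AG rotG"
    using f_inner_face[OF F inner] a(2) by simp
  then have "rotG (f c, f x) \<in> {(f x, f c), (f c, f a), (f a, f x)}"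
    using G.phi_in_face[OF F'] by (force simp: phi_def)
  moreover have "fst (rotG (f c, f x)) = f c" using G.rot_fst[OF f_arc[OF Z.arc_sym[OF xc]]] by simp
  moreover have "f x \<noteq> f c" "f a \<noteq> f c"
    using xc a(3) Z.arc_irrefl Z.arc_ends f_eq_iff by metis+
  ultimately have "rotG (f c, f x) = (f c, f a)" by auto
  then show ?thesis using that a by blast
qed

lemma outer_dart_if_rot_leaves_image:
  assumes vt: "(v, t) \<in> A" and leaves: "rotG (f v, f t) \<notin> image_darts v"
  shows "(t, v) \<in> Out"
proof (rule ccontr)
  assume "(t, v) \<notin> Out"
  moreover have "(t, v) \<in> face_orbit rot (t, v)"
    unfolding face_orbit_eq_orbit_of by simp
  ultimately have "face_orbit rot (t, v) \<noteq> Out" by auto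
  then obtain a where "(v, a) \<in> A" "rotG (f v, f t) = (f v, f a)"
    using rot_image_inner_face[OF Z.arc_sym[OF vt]] by blast
  then show False using leaves unfolding image_darts_def by auto
qed

lemma Out_subset: "Out \<subseteq> A"
proof (cases "A = {}")
  case True
  then show ?thesis using conf unfolding configuration_def near_triangulation_def faces_def by auto
next
  case False
  then show ?thesis using Z.face_subset[OF Out_face] by simp
qed

lemma Out_outer_vertices:
  assumes "(w, v) \<in> Out"
  shows "v \<in> outer_vertices V A Out" "w \<in> outer_vertices V A Out" "v \<in> V" "w \<in> V"
proof -
  have A: "A \<noteq> {}" "(w, v) \<in> A" using assms Out_subset by auto
  have "phi rot (w, v) \<in> Out" using Z.phi_in_face[OF Out_face[OF A(1)] assms] .
  moreover have "fst (phi rot (w, v)) = v"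
    using Z.rot_fst[OF Z.arc_sym[OF A(2)]] by (simp add: phi_def)
  ultimately have "v \<in> fst ` Out" by (metis image_eqI)
  moreover have "w \<in> fst ` Out" using assms by (metis fst_conv image_eqI)
  ultimately show "v \<in> outer_vertices V A Out" "w \<in> outer_vertices V A Out"
    unfolding outer_vertices_def using A by auto
  show "v \<in> V" "w \<in> V" using Z.arc_ends A by auto
qed

lemma card_new_neighbours: "v \<in> V \<Longrightarrow> card (new_neighbours v) = \<delta> v - deg A v"
proof -
  assume v: "v \<in> V"
  have sub: "f ` {t. (v, t) \<in> A} \<subseteq> {y. (f v, y) \<in> AG}" using f_arc by auto
  have "inj_on f {t. (v, t) \<in> A}" using cont Z.arc_ends unfolding contains_via_def
    by (auto intro: inj_on_subset)
  then have "card (f ` {t. (v, t) \<in> A}) = deg A v" unfolding deg_def by (simp add: card_image)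
  moreover have "card {y. (f v, y) \<in> AG} = \<delta> v" using f_deg[OF v] unfolding deg_def by simp
  ultimately show ?thesis
    unfolding new_neighbours_def
    using card_Diff_subset[OF finite_subset[OF sub G.finite_neighbours] sub]
    by simp
qed

lemma new_neighbour_not_image_arc:
  assumes "g \<in> new_neighbours v" "v \<in> V"
  shows "(f v, g) \<in> AG - map_prod f f ` A" "(f v, g) \<notin> image_darts v"
proof -
  show "(f v, g) \<notin> image_darts v"
    using assms(1) unfolding new_neighbours_def image_darts_def by auto
  have "(f v, g) \<notin> map_prod f f ` A"
  proof
    assume "(f v, g) \<in> map_prod f f ` A"
    then obtain x y where xy: "(x, y) \<in> A" "f v = f x" "g = f y" by auto
    then have "x = v" using f_eq_iff Z.arc_ends assms(2) by blast
    then show False using xy assms(1) unfolding new_neighbours_def by auto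
  qed
  then show "(f v, g) \<in> AG - map_prod f f ` A" using assms(1) unfolding new_neighbours_def by auto
qed

text \<open>Once v has a new neighbour, the image darts do not exhaust the darts at f v, so the
  G-rotation has to leave them somewhere.\<close>

lemma rot_leaves_image_darts:
  assumes g: "g \<in> new_neighbours v" "v \<in> V" and t0: "(v, t0) \<in> A"
  obtains t where "(v, t) \<in> A" "rotG (f v, f t) \<notin> image_darts v"
proof (rule ccontr)
  assume "\<not> thesis"
  then have closed: "\<forall>z\<in>image_darts v. rotG z \<in> image_darts v"
    using that unfolding image_darts_def by auto
  have "(f v, f t0) \<in> image_darts v" using t0 unfolding image_darts_def by auto
  moreover have "(f v, g) \<in> AG" using g(1) unfolding new_neighbours_def by auto
  ultimately have "(f v, g) \<in> image_darts v"
    using G.rot_closed_contains[OF f_arc[OF t0] _ closed] by simp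
  then show False using new_neighbour_not_image_arc[OF g] by simp
qed

lemma new_neighbour_exists:
  assumes "v \<in> V" "v \<in> outer_vertices V A Out"
  obtains g where "g \<in> new_neighbours v"
proof -
  have "0 < card (new_neighbours v)"
    using outer_vertex_deg[OF assms] card_new_neighbours[OF assms(1)] by simp
  then have "new_neighbours v \<noteq> {}" by auto
  then show ?thesis using that by blast
qed

text \<open>At a cut vertex no two new arcs are consecutive, so the arc before a new one is old.\<close>

lemma new_neighbour_after_image_dart:
  assumes cut: "cut_vertex V A v" and v: "v \<in> V" and vw: "(v, w) \<in> A"
    and g: "g \<in> new_neighbours v"
  obtains t where "(v, t) \<in> A" "rotG (f v, f t) = (f v, g)"
proof -
  have vwG: "(f v, f w) \<in> AG" using f_arc[OF vw] .
  have gG: "(f v, g) \<in> AG" and g_new: "(f v, g) \<in> AG - map_prod f f ` A"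
    using new_neighbour_not_image_arc[OF g v] by auto
  obtain n where n: "(rotG ^^ n) (f v, f w) = (f v, g)" using G.rot_reach[OF vwG gG] by auto
  have "g \<noteq> f w" using g vw unfolding new_neighbours_def by auto
  then obtain m where m: "n = Suc m" using n by (cases n) auto
  define h where "h = (rotG ^^ m) (f v, f w)"
  have "h \<in> AG" "fst h = f v" using G.rot_funpow[OF vwG] h_def by auto
  then obtain y where y: "(rotG ^^ m) (f v, f w) = (f v, y)" "(f v, y) \<in> AG"
    unfolding h_def by (metis prod.collapse)
  have rot_y: "rotG (f v, y) = (f v, g)" using n m y(1) by simp
  have "y \<notin> new_neighbours v"
  proof
    assume y_new: "y \<in> new_neighbours v"
    show False
    proof (cases "y = g")
      case True
      then show False
        using rot_y G.rot_no_fixpoint[OF gG vwG] \<open>g \<noteq> f w\<close> by simp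
    next
      case False
      then show False
        using cut_vertex_new_arcs_not_consecutive[OF cut v _ g_new] rot_y
          new_neighbour_not_image_arc(1)[OF y_new v] by blast
    qed
  qed
  then obtain t where "(v, t) \<in> A" "y = f t" using y(2) unfolding new_neighbours_def by auto
  then show ?thesis using that rot_y by blast
qed

text \<open>At an outer angle of Z, the triangulation always inserts a new neighbour: otherwise
  the new neighbours of v would sit in a second outer angle, making v a cut vertex, whose
  two new neighbours then lie in two further outer angles, giving three blocks at v.\<close>

lemma rot_outer_angle_leaves_image:
  assumes wv: "(w, v) \<in> Out"
  shows "rotG (f v, f w) \<notin> image_darts v"
proof
  assume stays: "rotG (f v, f w) \<in> image_darts v"
  have v: "v \<in> V" and vw: "(v, w) \<in> A" and A: "A \<noteq> {}"
    using Out_outer_vertices[OF wv] Out_subset wv Z.arc_sym by auto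
  have other_outer_angle: "(t, v) \<in> Out \<and> t \<noteq> w"
    if "(v, t) \<in> A" "rotG (f v, f t) \<notin> image_darts v" for t
    using outer_dart_if_rot_leaves_image[OF that] that(2) stays by auto
  obtain g where "g \<in> new_neighbours v"
    using new_neighbour_exists[OF v Out_outer_vertices(1)[OF wv]] .
  then obtain t where "(t, v) \<in> Out" "t \<noteq> w"
    using rot_leaves_image_darts[OF _ v vw] other_outer_angle by metis
  then have cut: "cut_vertex V A v" using Z.face_twice_cut_vertex[OF Out_face[OF A] _ wv] by blast
  then have "card (new_neighbours v) = 2"
    using cut_vertex_blocks[OF v] card_new_neighbours[OF v] by simp
  then obtain g1 g2 where g12: "new_neighbours v = {g1, g2}" "g1 \<noteq> g2" by (meson card_2_iff)
  obtain t1 where t1: "(v, t1) \<in> A" "rotG (f v, f t1) = (f v, g1)"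
    using new_neighbour_after_image_dart[OF cut v vw] g12 by blast
  obtain t2 where t2: "(v, t2) \<in> A" "rotG (f v, f t2) = (f v, g2)"
    using new_neighbour_after_image_dart[OF cut v vw] g12 by blast
  have "rotG (f v, f t1) \<notin> image_darts v" "rotG (f v, f t2) \<notin> image_darts v"
    using t1 t2 g12 new_neighbour_not_image_arc(2)[OF _ v] by auto
  then have out: "(t1, v) \<in> Out" "t1 \<noteq> w" "(t2, v) \<in> Out" "t2 \<noteq> w"
    using other_outer_angle t1(1) t2(1) by auto
  have "t1 \<noteq> t2" using t1 t2 g12 by auto
  note separated = Z.face_twice_no_avoiding_walk[OF Out_face[OF A]]
  have "3 \<le> card {B. is_block V A B \<and> v \<in> B}"
    using Z.three_blocks_at[OF vw t1(1) t2(1) separated[OF wv out(1)] separated[OF wv out(3)]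
        separated[OF out(1,3) \<open>t1 \<noteq> t2\<close>]] out(2,4) by blast
  then show False using cut_vertex_blocks[OF v cut] by simp
qed

lemma consecutive_image_neighbours_adjacent:
  assumes vu: "(v, u) \<in> A" and vw: "(v, w) \<in> A" and "u \<noteq> w"
    and r: "rotG (f v, f w) = (f v, f u)"
  shows "(u, w) \<in> A"
proof -
  have "rotG (f v, f w) \<in> image_darts v" using r vu unfolding image_darts_def by auto
  then have "(w, v) \<notin> Out" using rot_outer_angle_leaves_image by blast
  then have "face_orbit rot (w, v) \<noteq> Out" unfolding face_orbit_eq_orbit_of by auto
  then obtain a where "(a, w) \<in> A" "rotG (f v, f w) = (f v, f a)"
    using rot_image_inner_face[OF Z.arc_sym[OF vw]] by metis
  moreover have "a = u" using calculation r f_eq_iff Z.arc_ends vu by (metis prod.inject)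
  ultimately show ?thesis by simp
qed

lemma one_new_neighbour_in_outer_angle_cut_vertex:
  assumes v: "v \<in> V" and vpr: "(v, pr) \<in> A" and vnx: "(v, nx) \<in> A"
    and r1: "rotG (f v, f nx) = (f v, x)" and r2: "rotG (f v, x) = (f v, f pr)"
    and x: "x \<notin> f ` V" and nxv: "(nx, v) \<in> Out" and two: "deg A v + 2 \<le> \<delta> v"
  shows "cut_vertex V A v"
proof -
  have vx: "(f v, x) \<in> AG" using G.rot_in[OF f_arc[OF vnx]] r1 by simp
  have "x \<in> new_neighbours v" unfolding new_neighbours_def using vx x Z.arc_ends by auto
  moreover have "2 \<le> card (new_neighbours v)" using card_new_neighbours[OF v] two by simp
  ultimately have "\<not> new_neighbours v \<subseteq> {x}"
    using card_mono[of "{x}" "new_neighbours v"] by auto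
  then obtain g where g: "g \<in> new_neighbours v" "g \<noteq> x" by blast
  have "\<exists>t. (v, t) \<in> A \<and> t \<noteq> nx \<and> rotG (f v, f t) \<notin> image_darts v"
  proof (rule ccontr)
    assume no_gap: "\<not> ?thesis"
    let ?S = "image_darts v \<union> {(f v, x)}"
    have closed: "\<forall>z\<in>?S. rotG z \<in> ?S"
      using no_gap r1 r2 vpr unfolding image_darts_def by auto
    have "(f v, g) \<in> ?S"
      by (rule G.rot_closed_contains[OF vx _ closed]) (use g(1) in \<open>auto simp: new_neighbours_def\<close>)
    then show False using g new_neighbour_not_image_arc(2)[OF g(1) v] by auto
  qed
  then obtain t where t: "(v, t) \<in> A" "t \<noteq> nx" "rotG (f v, f t) \<notin> image_darts v" by blast
  have "A \<noteq> {}" using vnx by auto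
  then show ?thesis
    using Z.face_twice_cut_vertex[OF Out_face nxv outer_dart_if_rot_leaves_image[OF t(1,3)]] t(2)
    by metis
qed

definition chord_free_below :: "nat \<Rightarrow> bool" where
  "chord_free_below k \<longleftrightarrow> (\<forall>a b. chord a b \<longrightarrow> k \<le> dist A a b)"

lemma image_arc_iff_arc_if_near:
  assumes "chord_free_below k" "a \<in> V" "b \<in> V"
    and walk: "is_walk A xs" "hd xs = a" "last xs = b" "length xs \<le> k"
  shows "(f a, f b) \<in> AG \<longleftrightarrow> (a, b) \<in> A"
proof
  assume "(f a, f b) \<in> AG"
  show "(a, b) \<in> A"
  proof (rule ccontr)
    assume "(a, b) \<notin> A"
    then have "k \<le> dist A a b"
      using assms(1-3) \<open>(f a, f b) \<in> AG\<close> unfolding chord_free_below_def chord_def by blast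
    moreover have "0 < length xs" using walk(1) unfolding is_walk_def by simp
    ultimately show False using dist_le_walk[OF walk(1-3)] walk(4) by linarith
  qed
qed (rule f_arc)

lemma minimal_chord_exists:
  assumes "chord a b"
  obtains u w where "chord u w" "chord_free_below (dist A u w)"
proof -
  define P where "P k \<longleftrightarrow> (\<exists>u w. chord u w \<and> dist A u w = k)" for k
  have "P (dist A a b)" using assms unfolding P_def by blast
  then obtain u w where "chord u w" "dist A u w = (LEAST k. P k)"
    using LeastI[of P] unfolding P_def by blast
  moreover have "chord_free_below (LEAST k. P k)"
    unfolding chord_free_below_def P_def by (blast intro: Least_le)
  ultimately show ?thesis using that by simp
qed

lemma shortest_walk:
  assumes "u \<in> V" "w \<in> V"
  obtains ys where "is_walk A ys" "hd ys = u" "last ys = w" "length ys = Suc (dist A u w)"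
  using Z.connected assms walk_in_is_walk shortest_walk_exists unfolding connected_on_def by metis

lemma chord_dist_ge2:
  assumes "chord u w" shows "2 \<le> dist A u w"
proof -
  have uw: "u \<in> V" "w \<in> V" "(f u, f w) \<in> AG" "(u, w) \<notin> A" using assms unfolding chord_def by auto
  obtain ys where ys: "is_walk A ys" "hd ys = u" "last ys = w" "length ys = Suc (dist A u w)"
    using shortest_walk[OF uw(1,2)] .
  have "u \<noteq> w" using uw(3) G.arc_irrefl by auto
  show ?thesis
  proof (rule ccontr)
    assume "\<not> 2 \<le> dist A u w"
    then consider "length ys = 1" | "length ys = 2" using ys(4) by linarith
    then show False
    proof cases
      case 1
      then have "hd ys = last ys" by (cases ys) auto
      then show False using ys(2,3) \<open>u \<noteq> w\<close> by simp
    next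
      case 2
      then obtain a b where "ys = [a, b]" by (auto simp: numeral_eq_Suc length_Suc_conv)
      then show False using ys(1-3) uw(4) by simp
    qed
  qed
qed

lemma obstructing_cycleI:
  assumes "is_cycle VG AG cs" "length cs \<le> 4"
    "y \<in> cycle_side VG AG rotG cs True" "y' \<in> cycle_side VG AG rotG cs False"
  shows "obstructing_cycle VG AG rotG cs"
  using assms one_le_card_cycle_side[OF G.finite_V] unfolding obstructing_cycle_def by blast

lemma triangle_obstruction:
  assumes up: "(u, p) \<in> A" and pw: "(p, w) \<in> A" and ch: "chord u w"
  shows "obstructing_cycle VG AG rotG [f u, f p, f w]"
proof -
  have V: "u \<in> V" "p \<in> V" "w \<in> V" and uwG: "(f u, f w) \<in> AG" and uw: "(u, w) \<notin> A"
    using ch up pw Z.arc_ends unfolding chord_def by auto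
  have "u \<noteq> w" using uwG G.arc_irrefl by auto
  moreover have "u \<noteq> p" "p \<noteq> w" using up pw Z.arc_irrefl by auto
  ultimately have fne: "f u \<noteq> f p" "f p \<noteq> f w" "f u \<noteq> f w" using f_eq_iff V by auto
  let ?cs = "[f u, f p, f w]"
  have pwG: "(f p, f w) \<in> AG" and puG: "(f p, f u) \<in> AG"
    using f_arc pw Z.arc_sym[OF up] by auto
  have cycle: "is_cycle VG AG ?cs"
    by (rule is_cycle_of_walk) (use fne f_in V f_arc[OF up] pwG G.arc_sym[OF uwG] in auto)
  obtain y where y: "rotG (f p, f w) = (f p, y)" "(f p, y) \<in> AG"
    using G.rot_pair[OF pwG] .
  have "y \<noteq> f u"
    using consecutive_image_neighbours_adjacent[OF Z.arc_sym[OF up] pw \<open>u \<noteq> w\<close>] y(1) uw by auto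
  moreover have "y \<noteq> f w" using G.rot_no_fixpoint[OF pwG puG] fne y(1) by auto
  moreover have "y \<noteq> f p" using y(2) G.arc_irrefl by auto
  ultimately have forward: "y \<in> cycle_side VG AG rotG ?cs True"
    using fne y G.arc_ends by (intro cycle_side_memI(1)[of 1 ?cs "f p" "f w" "f u"]) auto
  obtain y' where y': "rotG (f p, f u) = (f p, y')" "(f p, y') \<in> AG"
    using G.rot_pair[OF puG] .
  have "y' \<noteq> f w"
    using consecutive_image_neighbours_adjacent[OF pw Z.arc_sym[OF up]] y'(1) uw \<open>u \<noteq> w\<close>
      Z.arc_sym by auto
  moreover have "y' \<noteq> f u" using G.rot_no_fixpoint[OF puG pwG] fne y'(1) by auto
  moreover have "y' \<noteq> f p" using y'(2) G.arc_irrefl by auto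
  ultimately have backward: "y' \<in> cycle_side VG AG rotG ?cs False"
    using fne y' G.arc_ends by (intro cycle_side_memI(2)[of 1 ?cs "f p" "f w" "f u"]) auto
  show ?thesis using obstructing_cycleI[OF cycle _ forward backward] by simp
qed

lemma square_obstruction:
  assumes e: "(u, p1) \<in> A" "(p1, p2) \<in> A" "(p2, w) \<in> A" and ch: "chord u w"
    and dst: "distinct [u, p1, p2, w]" and nonadj: "(f u, f p2) \<notin> AG" "(f p1, f w) \<notin> AG"
  shows "obstructing_cycle VG AG rotG (map f [u, p1, p2, w])"
proof -
  have V: "u \<in> V" "p1 \<in> V" "p2 \<in> V" "w \<in> V" using e Z.arc_ends by auto
  define c0 c1 c2 c3 where "c0 = f u" "c1 = f p1" "c2 = f p2" "c3 = f w"
  have cs: "map f [u, p1, p2, w] = [c0, c1, c2, c3]" using c0_c1_c2_c3_def by simp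
  have dst': "distinct [c0, c1, c2, c3]" using distinct_map_f[OF dst] V cs by simp
  have G: "(c0, c1) \<in> AG" "(c1, c2) \<in> AG" "(c2, c3) \<in> AG" "(c0, c3) \<in> AG"
    using e f_arc ch unfolding c0_c1_c2_c3_def chord_def by auto
  have nonadj': "(c0, c2) \<notin> AG" "(c1, c3) \<notin> AG" "(c3, c1) \<notin> AG"
    using nonadj G.arc_sym unfolding c0_c1_c2_c3_def by auto
  have cycle: "is_cycle VG AG [c0, c1, c2, c3]"
    by (rule is_cycle_of_walk) (use dst' G V f_in G.arc_sym c0_c1_c2_c3_def in auto)
  have no_chord: "\<forall>z\<in>set [c0, c1, c2, c3]. (c0, z) \<in> AG \<longrightarrow> z = c1 \<or> z = c3"
    using nonadj'(1) G.arc_irrefl by auto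
  note side = G.rot_successor_on_cycle_side[of 0 "[c0, c1, c2, c3]" c0 c1 c3, OF _ _ _ _ _ G(1,4)
      nonadj'(3) no_chord]
  obtain y where "rotG (c0, c1) = (c0, y)" using G.rot_pair[OF G(1)] .
  then have forward: "y \<in> cycle_side VG AG rotG [c0, c1, c2, c3] True"
    using side(1) dst' by simp
  obtain y' where "rotG (c0, c3) = (c0, y')" using G.rot_pair[OF G(4)] .
  then have backward: "y' \<in> cycle_side VG AG rotG [c0, c1, c2, c3] False"
    using side(2) dst' by simp
  show ?thesis unfolding cs using obstructing_cycleI[OF cycle _ forward backward] by simp
qed

definition slack_path :: "'v list \<Rightarrow> bool" where
  "slack_path P \<longleftrightarrow> on_outer_boundary V A Out P \<longrightarrow>
     (\<exists>i\<in>{1, 2, 3}. \<not> cut_vertex V A (P ! i) \<and> deg A (P ! i) + 2 \<le> \<delta> (P ! i))"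

lemma slack_path_rev:
  assumes "length P = 5" "slack_path P"
  shows "slack_path (rev P)"
  unfolding slack_path_def
proof
  assume "on_outer_boundary V A Out (rev P)"
  then obtain i where i: "i \<in> {1, 2, 3}" "\<not> cut_vertex V A (P ! i)" "deg A (P ! i) + 2 \<le> \<delta> (P ! i)"
    using assms(2) on_outer_boundary_rev unfolding slack_path_def by blast
  moreover have "rev P ! (4 - i) = P ! i" using i(1) assms(1) by (auto simp: rev_nth)
  moreover have "4 - i \<in> {1, 2, 3}" using i(1) by auto
  ultimately show
    "\<exists>i\<in>{1, 2, 3}. \<not> cut_vertex V A (rev P ! i) \<and> deg A (rev P ! i) + 2 \<le> \<delta> (rev P ! i)"
    by metis
qed

lemma on_outer_boundaryI:
  assumes "1 < length P" "\<forall>i. Suc i < length P \<longrightarrow> (P ! Suc i, P ! i) \<in> Out"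
  shows "on_outer_boundary V A Out P"
  unfolding on_outer_boundary_def
proof (intro conjI subsetI allI impI)
  fix v assume "v \<in> set P"
  then obtain j where j: "j < length P" "v = P ! j" by (auto simp: in_set_conv_nth)
  show "v \<in> outer_vertices V A Out"
  proof (cases "Suc j < length P")
    case True then show ?thesis using assms(2) j Out_outer_vertices(1) by blast
  next
    case False
    then have "Suc (j - 1) = j" "Suc (j - 1) < length P" using assms(1) j(1) by auto
    then have "(P ! j, P ! (j - 1)) \<in> Out" using assms(2) by metis
    then show ?thesis using j(2) Out_outer_vertices(2) by blast
  qed
qed (use assms(2) in blast)

lemma pentagon_no_G_chords:
  assumes e: "(p0, p1) \<in> A" "(p1, p2) \<in> A" "(p2, p3) \<in> A" "(p3, p4) \<in> A"
    and ch: "chord p4 p0" and min: "chord_free_below 4"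
  shows "(f p0, f p2) \<notin> AG" "(f p0, f p3) \<notin> AG" "(f p1, f p3) \<notin> AG"
    "(f p1, f p4) \<notin> AG" "(f p2, f p4) \<notin> AG"
proof -
  have V: "p0 \<in> V" "p1 \<in> V" "p2 \<in> V" "p3 \<in> V" "p4 \<in> V" using e Z.arc_ends by auto
  have far: "4 \<le> dist A p4 p0" using ch min unfolding chord_free_below_def by blast
  have short: False if "is_walk A xs" "hd xs = p4" "last xs = p0" "length xs \<le> 4" for xs
    using dist_le_walk[OF that(1-3)] that(4) far by simp
  note iff = image_arc_iff_arc_if_near[OF min]
  note r = Z.arc_sym[OF e(1)] Z.arc_sym[OF e(2)] Z.arc_sym[OF e(3)] Z.arc_sym[OF e(4)]
  show "(f p0, f p2) \<notin> AG"
    using iff[OF V(1,3), of "[p0, p1, p2]"] short[of "[p4, p3, p2, p0]"]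
      e r Z.arc_sym[of p0 p2] by auto
  show "(f p0, f p3) \<notin> AG"
    using iff[OF V(1,4), of "[p0, p1, p2, p3]"] short[of "[p4, p3, p0]"]
      e r Z.arc_sym[of p0 p3] by auto
  show "(f p1, f p3) \<notin> AG"
    using iff[OF V(2,4), of "[p1, p2, p3]"] short[of "[p4, p3, p1, p0]"]
      e r Z.arc_sym[of p1 p3] by auto
  show "(f p1, f p4) \<notin> AG"
    using iff[OF V(2,5), of "[p1, p2, p3, p4]"] short[of "[p4, p1, p0]"]
      e r Z.arc_sym[of p1 p4] by auto
  show "(f p2, f p4) \<notin> AG"
    using iff[OF V(3,5), of "[p2, p3, p4]"] short[of "[p4, p2, p1, p0]"]
      e r Z.arc_sym[of p2 p4] by auto
qed

text \<open>A vertex of Z adjacent in G to the whole pentagon would be adjacent in Z to p0 and p4,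
  which are at distance 4.\<close>

lemma pentagon_fan_centre_not_in_image:
  assumes e: "(p0, p1) \<in> A" "(p1, p2) \<in> A" "(p2, p3) \<in> A" "(p3, p4) \<in> A"
    and ch: "chord p4 p0" and min: "chord_free_below 4"
    and fan: "rotG (x, f p0) = (x, f p1)" "rotG (x, f p1) = (x, f p2)" "rotG (x, f p2) = (x, f p3)"
      "rotG (x, f p3) = (x, f p4)" "rotG (x, f p4) = (x, f p0)" "(x, f p0) \<in> AG"
  shows "x \<notin> f ` V"
proof
  assume "x \<in> f ` V"
  then obtain z where z: "z \<in> V" "x = f z" by auto
  have V: "p0 \<in> V" "p1 \<in> V" "p2 \<in> V" "p3 \<in> V" "p4 \<in> V" using e Z.arc_ends by auto
  obtain z' where zz': "(z, z') \<in> A"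
    using Z.no_isolated_vertex[OF V(1,2) _ z(1)] e(1) Z.arc_irrefl by metis
  let ?S = "{(x, f p0), (x, f p1), (x, f p2), (x, f p3), (x, f p4)}"
  have "(x, f z') \<in> ?S"
    by (rule G.rot_closed_contains[OF fan(6)]) (use fan f_arc[OF zz'] z in auto)
  then have "f z' \<in> f ` {p0, p1, p2, p3, p4}" by auto
  then have z': "z' \<in> {p0, p1, p2, p3, p4}" using f_eq_iff Z.arc_ends[OF zz'] V by auto
  have "(x, f p1) \<in> AG" using G.rot_in[OF fan(6)] fan(1) by simp
  moreover have "(x, f p2) \<in> AG" using G.rot_in[OF calculation] fan(2) by simp
  moreover have "(x, f p3) \<in> AG" using G.rot_in[OF calculation(2)] fan(3) by simp
  moreover have "(x, f p4) \<in> AG" using G.rot_in[OF calculation(3)] fan(4) by simp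
  ultimately have zG: "(f z, f p) \<in> AG" if "p \<in> {p0, p1, p2, p3, p4}" for p
    using that fan(6) z(2) by auto
  note iff = image_arc_iff_arc_if_near[OF min z(1)]
  note r = Z.arc_sym[OF e(1)] Z.arc_sym[OF e(2)] Z.arc_sym[OF e(3)] Z.arc_sym[OF e(4)]
  have z2: "(z, p2) \<in> A"
    using z' iff[OF V(3), of "[z, p0, p1, p2]"] iff[OF V(3), of "[z, p1, p2]"]
      iff[OF V(3), of "[z, p3, p2]"] iff[OF V(3), of "[z, p4, p3, p2]"] zz' e r zG by auto
  have "(z, p0) \<in> A" using iff[OF V(1), of "[z, p2, p1, p0]"] z2 r zG by auto
  moreover have "(z, p4) \<in> A" using iff[OF V(5), of "[z, p2, p3, p4]"] z2 e zG by auto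
  ultimately have "dist A p4 p0 \<le> 2"
    using dist_le_walk[of A "[p4, z, p0]" p4 p0] Z.arc_sym[of z p4] by simp
  moreover have "4 \<le> dist A p4 p0" using ch min unfolding chord_free_below_def by blast
  ultimately show False by simp
qed

lemma pentagon_successors_on_side:
  assumes path: "is_path A [p0, p1, p2, p3, p4]" and ch: "chord p4 p0" and min: "chord_free_below 4"
  obtains y0 y1 y2 y3 y4 where "rotG (f p0, f p1) = (f p0, y0)" "rotG (f p1, f p2) = (f p1, y1)"
    "rotG (f p2, f p3) = (f p2, y2)" "rotG (f p3, f p4) = (f p3, y3)"
    "rotG (f p4, f p0) = (f p4, y4)"
    "{y0, y1, y2, y3, y4} \<subseteq> cycle_side VG AG rotG (map f [p0, p1, p2, p3, p4]) True"
proof -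
  have e: "(p0, p1) \<in> A" "(p1, p2) \<in> A" "(p2, p3) \<in> A" "(p3, p4) \<in> A"
    and dst: "distinct [p0, p1, p2, p3, p4]" using path unfolding is_path_def by auto
  have V: "p0 \<in> V" "p1 \<in> V" "p2 \<in> V" "p3 \<in> V" "p4 \<in> V" using e Z.arc_ends by auto
  define c0 c1 c2 c3 c4 where "c0 = f p0" "c1 = f p1" "c2 = f p2" "c3 = f p3" "c4 = f p4"
  note c_defs = c0_c1_c2_c3_c4_def
  define cs where "cs = [c0, c1, c2, c3, c4]"
  have cs_map: "map f [p0, p1, p2, p3, p4] = cs" unfolding cs_def c_defs by simp
  have dst': "distinct cs" unfolding cs_map[symmetric] using distinct_map_f[OF dst] V by simp
  have G: "(c0, c1) \<in> AG" "(c1, c2) \<in> AG" "(c2, c3) \<in> AG" "(c3, c4) \<in> AG" "(c4, c0) \<in> AG"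
    using e f_arc ch unfolding c_defs chord_def by auto
  have Gr: "(c1, c0) \<in> AG" "(c2, c1) \<in> AG" "(c3, c2) \<in> AG" "(c4, c3) \<in> AG" "(c0, c4) \<in> AG"
    using G G.arc_sym by auto
  have nonadj: "(c0, c2) \<notin> AG" "(c0, c3) \<notin> AG" "(c1, c3) \<notin> AG" "(c1, c4) \<notin> AG"
    "(c2, c4) \<notin> AG"
    using pentagon_no_G_chords[OF e ch min] unfolding c_defs .
  then have nonadj_r: "(c2, c0) \<notin> AG" "(c3, c0) \<notin> AG" "(c3, c1) \<notin> AG" "(c4, c1) \<notin> AG"
    "(c4, c2) \<notin> AG"
    using G.arc_sym by blast+
  obtain y0 y1 y2 y3 y4 where y: "rotG (c0, c1) = (c0, y0)" "rotG (c1, c2) = (c1, y1)"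
    "rotG (c2, c3) = (c2, y2)" "rotG (c3, c4) = (c3, y3)" "rotG (c4, c0) = (c4, y4)"
    using G.rot_pair[OF G(1)] G.rot_pair[OF G(2)] G.rot_pair[OF G(3)] G.rot_pair[OF G(4)]
      G.rot_pair[OF G(5)] by metis
  have dst_c: "c1 \<noteq> c4" "c2 \<noteq> c0" "c3 \<noteq> c1" "c4 \<noteq> c2" "c0 \<noteq> c3"
    using dst' unfolding cs_def by auto
  let ?S = "cycle_side VG AG rotG cs True"
  note side = G.rot_successor_on_cycle_side(1)[of _ cs]
  note facts = y G Gr nonadj nonadj_r dst_c G.arc_irrefl
  have "y0 \<in> ?S" by (rule side[of 0 c0 c1 c4]) (use facts in \<open>auto simp: cs_def\<close>)
  moreover have "y1 \<in> ?S" by (rule side[of 1 c1 c2 c0]) (use facts in \<open>auto simp: cs_def\<close>)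
  moreover have "y2 \<in> ?S" by (rule side[of 2 c2 c3 c1]) (use facts in \<open>auto simp: cs_def\<close>)
  moreover have "y3 \<in> ?S" by (rule side[of 3 c3 c4 c2]) (use facts in \<open>auto simp: cs_def\<close>)
  moreover have "y4 \<in> ?S" by (rule side[of 4 c4 c0 c3]) (use facts in \<open>auto simp: cs_def\<close>)
  ultimately have "{y0, y1, y2, y3, y4} \<subseteq> ?S" by blast
  then show ?thesis using that y unfolding c_defs cs_map[symmetric] by blast
qed

text \<open>If all five successors coincide, a single vertex fans around the whole pentagon.\<close>

lemma pentagon_common_successor_impossible:
  assumes path: "is_path A [p0, p1, p2, p3, p4]" and ch: "chord p4 p0"
    and min: "chord_free_below 4" and slack: "slack_path [p0, p1, p2, p3, p4]"
    and y: "rotG (f p0, f p1) = (f p0, x)" "rotG (f p1, f p2) = (f p1, x)"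
      "rotG (f p2, f p3) = (f p2, x)" "rotG (f p3, f p4) = (f p3, x)"
      "rotG (f p4, f p0) = (f p4, x)"
  shows False
proof -
  have e: "(p0, p1) \<in> A" "(p1, p2) \<in> A" "(p2, p3) \<in> A" "(p3, p4) \<in> A"
    using path unfolding is_path_def by auto
  have V: "p0 \<in> V" "p1 \<in> V" "p2 \<in> V" "p3 \<in> V" "p4 \<in> V" using e Z.arc_ends by auto
  have "(f p4, f p0) \<in> AG" using ch unfolding chord_def by blast
  note t = G.rot_successor_triangle[OF f_arc[OF e(1)] y(1)]
    G.rot_successor_triangle[OF f_arc[OF e(2)] y(2)]
    G.rot_successor_triangle[OF f_arc[OF e(3)] y(3)]
    G.rot_successor_triangle[OF f_arc[OF e(4)] y(4)] G.rot_successor_triangle[OF this y(5)]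
  have outside: "x \<notin> f ` V" using pentagon_fan_centre_not_in_image[OF e ch min] t by simp
  then have leaves: "rotG (f v, f t) = (f v, x) \<Longrightarrow> rotG (f v, f t) \<notin> image_darts v" for v t
    unfolding image_darts_def using Z.arc_ends by auto
  note outer_dart = outer_dart_if_rot_leaves_image[OF _ leaves]
  have Out: "(p1, p0) \<in> Out" "(p2, p1) \<in> Out" "(p3, p2) \<in> Out" "(p4, p3) \<in> Out"
    using outer_dart[OF e(1) y(1)] outer_dart[OF e(2) y(2)] outer_dart[OF e(3) y(3)]
      outer_dart[OF e(4) y(4)] by auto
  have "on_outer_boundary V A Out [p0, p1, p2, p3, p4]"
    using Out by (intro on_outer_boundaryI) (auto simp: less_Suc_eq nth_Cons')
  then obtain i where i: "i \<in> {1, 2, 3}" "\<not> cut_vertex V A ([p0, p1, p2, p3, p4] ! i)"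
    "deg A ([p0, p1, p2, p3, p4] ! i) + 2 \<le> \<delta> ([p0, p1, p2, p3, p4] ! i)"
    using slack unfolding slack_path_def by blast
  note cut = one_new_neighbour_in_outer_angle_cut_vertex[OF _ _ _ _ _ outside]
  have "cut_vertex V A p1" if "deg A p1 + 2 \<le> \<delta> p1"
    using cut[OF V(2) Z.arc_sym[OF e(1)] e(2)] y t Out that by simp
  moreover have "cut_vertex V A p2" if "deg A p2 + 2 \<le> \<delta> p2"
    using cut[OF V(3) Z.arc_sym[OF e(2)] e(3)] y t Out that by simp
  moreover have "cut_vertex V A p3" if "deg A p3 + 2 \<le> \<delta> p3"
    using cut[OF V(4) Z.arc_sym[OF e(3)] e(4)] y t Out that by simp
  ultimately show False using i by auto
qed

lemma pentagon_forward_side: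
  assumes path: "is_path A [p0, p1, p2, p3, p4]" and ch: "chord p4 p0"
    and min: "chord_free_below 4" and slack: "slack_path [p0, p1, p2, p3, p4]"
  shows "2 \<le> card (cycle_side VG AG rotG (map f [p0, p1, p2, p3, p4]) True)"
    (is "2 \<le> card ?S")
proof (rule ccontr)
  assume "\<not> 2 \<le> card ?S"
  then have "card ?S \<le> Suc 0" by simp
  then have single: "\<forall>a\<in>?S. \<forall>b\<in>?S. a = b"
    using card_le_Suc0_iff_eq[OF finite_subset[OF cycle_side_subset G.finite_V]] by blast
  obtain y0 y1 y2 y3 y4 where y: "rotG (f p0, f p1) = (f p0, y0)" "rotG (f p1, f p2) = (f p1, y1)"
    "rotG (f p2, f p3) = (f p2, y2)" "rotG (f p3, f p4) = (f p3, y3)"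
    "rotG (f p4, f p0) = (f p4, y4)"
    "{y0, y1, y2, y3, y4} \<subseteq> ?S"
    by (rule pentagon_successors_on_side[OF path ch min])
  then have "y1 = y0" "y2 = y0" "y3 = y0" "y4 = y0" using single by auto
  then show False using pentagon_common_successor_impossible[OF path ch min slack] y by simp
qed

lemma is_walk_map_f: "is_walk A ps \<Longrightarrow> is_walk AG (map f ps)"
  unfolding is_walk_def using f_arc by simp

lemma pentagon_obstruction:
  assumes path: "is_path A [p0, p1, p2, p3, p4]" and ch: "chord p4 p0"
    and min: "chord_free_below 4" and slack: "slack_path [p0, p1, p2, p3, p4]"
  shows "obstructing_cycle VG AG rotG (map f [p0, p1, p2, p3, p4])"
proof -
  let ?ps = "[p0, p1, p2, p3, p4]"
  have V: "set ?ps \<subseteq> V" using path Z.arc_ends unfolding is_path_def by auto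
  have "is_path A (rev ?ps)" using path Z.arc_sym unfolding is_path_def by auto
  then have "2 \<le> card (cycle_side VG AG rotG (map f (rev ?ps)) True)"
    using pentagon_forward_side[OF _ chord_sym[OF ch] min] slack_path_rev[OF _ slack] by simp
  then have backward: "2 \<le> card (cycle_side VG AG rotG (map f ?ps) False)"
    by (simp only: rev_map[symmetric] cycle_side_rev)
  have "distinct (map f ?ps)" using distinct_map_f path V unfolding is_path_def by blast
  moreover have "is_walk AG (map f ?ps)" using is_walk_map_f path unfolding is_path_def by blast
  ultimately have "is_cycle VG AG (map f ?ps)"
    using V f_in ch unfolding chord_def by (intro is_cycle_of_walk) auto
  then show ?thesis
    using pentagon_forward_side[OF path ch min slack] backward unfolding obstructing_cycle_def
    by simp
qed

lemma chord_dist2_obstruction: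
  assumes ch: "chord u w" and "dist A u w = 2"
  shows "\<exists>cs. set cs \<subseteq> f ` V \<and> obstructing_cycle VG AG rotG cs"
proof -
  obtain ys where ys: "is_walk A ys" "hd ys = u" "last ys = w" "length ys = Suc (dist A u w)"
    using shortest_walk ch unfolding chord_def by blast
  then obtain p where "ys = [u, p, w]"
    using assms(2) by (auto simp: numeral_eq_Suc length_Suc_conv)
  then have e: "(u, p) \<in> A" "(p, w) \<in> A" using ys(1) by auto
  then have "set [f u, f p, f w] \<subseteq> f ` V" using Z.arc_ends by auto
  then show ?thesis using triangle_obstruction[OF e ch] by blast
qed

lemma chord_dist3_obstruction:
  assumes ch: "chord u w" and dist: "dist A u w = 3" and min: "chord_free_below 3"
  shows "\<exists>cs. set cs \<subseteq> f ` V \<and> obstructing_cycle VG AG rotG cs"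
proof -
  obtain ys where ys: "is_walk A ys" "hd ys = u" "last ys = w" "length ys = Suc (dist A u w)"
    using shortest_walk ch unfolding chord_def by blast
  then obtain p1 p2 where "ys = [u, p1, p2, w]"
    using dist by (auto simp: numeral_eq_Suc length_Suc_conv)
  then have e: "(u, p1) \<in> A" "(p1, p2) \<in> A" "(p2, w) \<in> A" using ys(1) by auto
  have V: "u \<in> V" "p1 \<in> V" "p2 \<in> V" "w \<in> V" using e Z.arc_ends by auto
  have longer: False if "is_walk A xs" "hd xs = u" "last xs = w" "length xs \<le> 3" for xs
    using dist_le_walk[OF that(1-3)] that(4) dist by simp
  have "u \<noteq> w" using ch G.arc_irrefl unfolding chord_def by auto
  then have dst: "distinct [u, p1, p2, w]"
    using e Z.arc_irrefl longer[of "[u, w]"] by auto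
  note iff = image_arc_iff_arc_if_near[OF min]
  have "(f u, f p2) \<notin> AG"
    using iff[OF V(1,3), of "[u, p1, p2]"] longer[of "[u, p2, w]"] e by auto
  moreover have "(f p1, f w) \<notin> AG"
    using iff[OF V(2,4), of "[p1, p2, w]"] longer[of "[u, p1, w]"] e by auto
  ultimately have "obstructing_cycle VG AG rotG (map f [u, p1, p2, w])"
    using square_obstruction[OF e ch dst] by blast
  moreover have "set (map f [u, p1, p2, w]) \<subseteq> f ` V" using V by auto
  ultimately show ?thesis by blast
qed

lemma chord_dist4_obstruction:
  assumes ch: "chord u w" and min: "chord_free_below 4"
    and path: "is_path A P" "length P = 5" "hd P = u" "last P = w" and slack: "slack_path P"
  shows "\<exists>cs. set cs \<subseteq> f ` V \<and> obstructing_cycle VG AG rotG cs"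
proof -
  obtain p1 p2 p3 where P: "P = [u, p1, p2, p3, w]"
    using path(2-4) by (auto simp: numeral_eq_Suc length_Suc_conv)
  have "obstructing_cycle VG AG rotG (map f P)"
    using pentagon_obstruction[OF path(1)[unfolded P] chord_sym[OF ch] min] slack P by simp
  moreover have "set (map f P) \<subseteq> f ` V" using path(1) Z.arc_ends P unfolding is_path_def by auto
  ultimately show ?thesis by blast
qed

lemma chord_obstruction:
  assumes "chord a b" and diam: "\<forall>u\<in>V. \<forall>w\<in>V. dist A u w \<le> 4"
    and paths: "\<forall>u\<in>V. \<forall>w\<in>V. dist A u w = 4 \<longrightarrow>
      (\<exists>P. is_path A P \<and> length P = 5 \<and> hd P = u \<and> last P = w \<and> slack_path P)"
  shows "\<exists>cs. set cs \<subseteq> f ` V \<and> obstructing_cycle VG AG rotG cs"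
proof -
  obtain u w where ch: "chord u w" and min: "chord_free_below (dist A u w)"
    using minimal_chord_exists[OF assms(1)] .
  have uw: "u \<in> V" "w \<in> V" using ch unfolding chord_def by auto
  have "2 \<le> dist A u w" "dist A u w \<le> 4" using chord_dist_ge2[OF ch] diam uw by auto
  then consider "dist A u w = 2" | "dist A u w = 3" | "dist A u w = 4" by linarith
  then show ?thesis
  proof cases
    case 1 then show ?thesis using chord_dist2_obstruction[OF ch] by simp
  next
    case 2 then show ?thesis using chord_dist3_obstruction[OF ch] min by simp
  next
    case 3
    then obtain P where "is_path A P" "length P = 5" "hd P = u" "last P = w" "slack_path P"
      using paths uw by blast
    then show ?thesis using chord_dist4_obstruction[OF ch] min 3 by simp
  qed
qed

end

theorem lemma3p1:
  fixes V :: "'v set" and A :: "('v \<times> 'v) set" and rot :: "'v \<times> 'v \<Rightarrow> 'v \<times> 'v"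
    and Out :: "('v \<times> 'v) set" and \<delta> :: "'v \<Rightarrow> nat"
    and VG :: "'w set" and AG :: "('w \<times> 'w) set" and rotG :: "'w \<times> 'w \<Rightarrow> 'w \<times> 'w"
    and f :: "'v \<Rightarrow> 'w"
  assumes conf: "configuration V A rot Out \<delta>"
    and diam: "\<forall>u\<in>V. \<forall>w\<in>V. dist A u w \<le> 4"
    and dist4: "\<forall>u\<in>V. \<forall>w\<in>V. dist A u w = 4 \<longrightarrow>
       (\<exists>P. is_path A P \<and> length P = 5 \<and> hd P = u \<and> last P = w \<and>
          (\<not> on_outer_boundary V A Out P \<or>
           (on_outer_boundary V A Out P \<and>
            (\<exists>i\<in>{1, 2, 3}. \<not> cut_vertex V A (P ! i) \<and> deg A (P ! i) + 2 \<le> \<delta> (P ! i)))))"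
    and tri: "triangulation VG AG rotG"
    and cont: "contains_via V A rot Out \<delta> VG AG rotG f"
    and noobs: "\<forall>cs. set cs \<subseteq> f ` V \<longrightarrow> \<not> obstructing_cycle VG AG rotG cs"
  shows "induced_via V A rot Out \<delta> VG AG rotG f"
proof -
  interpret configuration_in_triangulation V A rot Out \<delta> VG AG rotG f
    using conf tri cont by unfold_locales
  have "\<forall>u\<in>V. \<forall>w\<in>V. dist A u w = 4 \<longrightarrow>
      (\<exists>P. is_path A P \<and> length P = 5 \<and> hd P = u \<and> last P = w \<and> slack_path P)"
    using dist4 unfolding slack_path_def by blast
  then have "\<not> chord u w" for u w
    using chord_obstruction[OF _ diam] noobs by blast
  then show ?thesis using cont unfolding induced_via_def chord_def by blast
qed

end
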